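(* Let $\Gamma(\mathbf z)=\sum_{\mathbf i\in\mathbb N^d} f_{\mathbf i}\mathbf z^{\mathbf i}$ be a power series with nonnegative coefficients whose domain of absolute convergence has nonempty interior $\mathscr D\subset\mathbb C^d$. Let $\nu=\nu_\Gamma$ be the measure on $\mathbb R^d$ given by $\nu(S)=\sum_{\mathbf i\in S\cap\mathbb N^d} f_{\mathbf i}$. Assume that $\Gamma$ satisfies the concave growth condition (CG): there exist $a,b,c>0$ such that for all $\mathbf x,\mathbf y\in\mathbb R^d$, $$\nu(B_{\mathbf x+\mathbf y}(a))\ \ge\ c\,\nu(B_{\mathbf x}(b))\,\nu(B_{\mathbf y}(b)),$$ and assume $\tau_\nu:=\sup_{\|\mathbf x\|=1}\psi_\Gamma(\mathbf x)<\infty$. Let $\Omega=\mathrm{Relog}(\mathscr D\cap\mathbb C_*^d)$ and let $\overline\Omega$ be its closure in $\mathbb R^d$. Then $-\psi_\Gamma$ is the support function of $\overline\Omega$, i.e. $-\psi_\Gamma(\mathbf x)=\sup_{\theta\in\overline\Omega}\langle\mathbf x,\theta\rangle$ for all $\mathbf x\in\mathbb R^d$, and for $\mathbf x\in\mathbb R^d_{\ge0}$ $$\psi_\Gamma(\mathbf x)=\inf_{\theta\in-\overline\Omega}\langle\mathbf x,\theta\rangle,$$ and, if $\Omega\ne\mathbb R^d$, $$\psi_\Gamma(\mathbf x)=\inf_{\theta\in-\partial\overline\Omega}\langle\mathbf x,\theta\rangle .$$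
   Context: $\|\cdot\|$ is the $\ell^1$ norm on $\mathbb R^d$ and $B_{\mathbf x}(a)$ is the closed/open ball of radius $a$ centered at $\mathbf x$ for this norm. $\mathbb C_*=\mathbb C\setminus\{0\}$ and $\mathrm{Relog}:\mathbb C_*^d\to\mathbb R^d$, $\mathrm{Relog}(\mathbf z)=(\log|z_1|,\dots,\log|z_d|)$. $\langle\cdot,\cdot\rangle$ is the standard inner product. The indicatrice of growth $\psi_\Gamma:\mathbb R^d\to\mathbb R\cup\{-\infty\}$ is defined by: for an open cone $C\subset\mathbb R^d$, $\tau_C=\limsup_{R\to\infty}\frac1R\log\Big(\sum_{\mathbf i\in C\cap\mathbb N^d,\ R\le\|\mathbf i\|\le R+1} f_{\mathbf i}\Big)$ (with $\log 0=-\infty$), and for $\mathbf x\ne0$, $\psi_\Gamma(\mathbf x)=\|\mathbf x\|\inf_{C\ni\mathbf x}\tau_C$, the infimum over open cones containing $\mathbf x$; $\psi_\Gamma(\mathbf 0)=0$. *)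

theory Defs
  imports "HOL-Analysis.Analysis"
begin

definition l1norm :: "real^'d \<Rightarrow> real" where
  "l1norm x = (\<Sum>k\<in>UNIV. \<bar>x $ k\<bar>)"

definition idx_vec :: "('d \<Rightarrow> nat) \<Rightarrow> real^'d" where
  "idx_vec i = (\<chi> k. real (i k))"

definition nu_ball :: "(('d::finite \<Rightarrow> nat) \<Rightarrow> real) \<Rightarrow> real^'d \<Rightarrow> real \<Rightarrow> real" where
  "nu_ball f x a = (\<Sum>i\<in>{i. l1norm (idx_vec i - x) \<le> a}. f i)"

definition elog :: "real \<Rightarrow> ereal" where
  "elog t = (if t = 0 then -\<infinity> else ereal (ln t))"

definition open_cone :: "(real^'d) set \<Rightarrow> bool" where
  "open_cone C \<longleftrightarrow> open C \<and> (\<forall>x\<in>C. \<forall>t>0. t *\<^sub>R x \<in> C)"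

definition tau_cone :: "(('d::finite \<Rightarrow> nat) \<Rightarrow> real) \<Rightarrow> (real^'d) set \<Rightarrow> ereal" where
  "tau_cone f C = Limsup at_top (\<lambda>R::real.
      ereal (1 / R) * elog (\<Sum>i\<in>{i. idx_vec i \<in> C \<and> R \<le> l1norm (idx_vec i)
                                    \<and> l1norm (idx_vec i) \<le> R + 1}. f i))"

definition psi :: "(('d::finite \<Rightarrow> nat) \<Rightarrow> real) \<Rightarrow> real^'d \<Rightarrow> ereal" where
  "psi f x = (if x = 0 then 0
     else ereal (l1norm x) * (INF C\<in>{C. open_cone C \<and> x \<in> C}. tau_cone f C))"

definition abs_conv_domain :: "(('d::finite \<Rightarrow> nat) \<Rightarrow> real) \<Rightarrow> (complex^'d) set" where
  "abs_conv_domain f = {z. (\<lambda>i. f i * (\<Prod>k\<in>UNIV. norm (z $ k) ^ i k)) summable_on UNIV}"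

definition Relog :: "complex^'d \<Rightarrow> real^'d" where
  "Relog z = (\<chi> k. ln (norm (z $ k)))"

definition Omega :: "(('d::finite \<Rightarrow> nat) \<Rightarrow> real) \<Rightarrow> (real^'d) set" where
  "Omega f = Relog ` (interior (abs_conv_domain f) \<inter> {z. \<forall>k. z $ k \<noteq> 0})"

end

theory Submission
  imports Defs "HOL-Real_Asymp.Real_Asymp"
begin

(*
  For a direction x, psi x is the exponential rate at which the coefficients f i with i near
  the ray through x grow. Under (CG) two heavy multi-indices merge into a heavy multi-index
  near their sum, so psi is superadditive; being positively homogeneous it is concave, and
  tau_nu < infinity makes it upper semicontinuous. Its hypograph is therefore a closed convex
  cone, and separating points from it shows that -psi is the support function of the set K of
  linear majorants, K = {theta. psi y <= -<y, theta> for all y}.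

  K is the closure of Omega: for theta in Omega the terms f i * exp <i, theta> are bounded,
  which forces theta into K; conversely, for theta in K these terms grow subexponentially
  (by compactness of the unit sphere of directions), so theta - eps (1, ..., 1) lies in Omega.
  Finally psi = -infinity off the nonnegative orthant, so K is downward closed, and for x >= 0
  pushing a point of K along (1, ..., 1) up to the frontier only increases <x, theta>.
*)

section \<open>The l1 norm and lattice points\<close>

lemma l1norm_nonneg: "l1norm x \<ge> 0"
  unfolding l1norm_def by (simp add: sum_nonneg)

lemma l1norm_scaleR: "l1norm (t *\<^sub>R x) = \<bar>t\<bar> * l1norm x"
  unfolding l1norm_def by (simp add: sum_distrib_left abs_mult)

lemma l1norm_eq_0_iff: "l1norm x = 0 \<longleftrightarrow> x = 0"
  unfolding l1norm_def by (simp add: sum_nonneg_eq_0_iff vec_eq_iff)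

lemma l1norm_pos: "x \<noteq> 0 \<Longrightarrow> l1norm x > 0"
  using l1norm_nonneg[of x] l1norm_eq_0_iff[of x] by linarith

lemma l1norm_triangle: "l1norm (x + y) \<le> l1norm x + l1norm y"
  unfolding l1norm_def by (simp add: sum.distrib[symmetric] sum_mono abs_triangle_ineq)

lemma l1norm_triangle3: "l1norm (u + v + w) \<le> l1norm u + l1norm v + l1norm w"
  using l1norm_triangle[of "u + v" w] l1norm_triangle[of u v] by linarith

lemma l1norm_minus_commute: "l1norm (x - y) = l1norm (y - x)"
  unfolding l1norm_def by (simp add: abs_minus_commute)

lemma norm_le_l1norm: "norm x \<le> l1norm x"
  unfolding l1norm_def by (rule norm_le_l1_cart)

lemma abs_nth_le_l1norm: "\<bar>x $ k\<bar> \<le> l1norm x"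
  unfolding l1norm_def by (rule member_le_sum) auto

lemma continuous_on_l1norm [continuous_intros]:
  "continuous_on S g \<Longrightarrow> continuous_on S (\<lambda>x. l1norm (g x))"
  unfolding l1norm_def by (intro continuous_intros)

lemma abs_inner_le_l1norm: "\<bar>v \<bullet> w\<bar> \<le> l1norm v * l1norm w"
proof -
  have "\<bar>v \<bullet> w\<bar> \<le> (\<Sum>k\<in>UNIV. \<bar>v $ k\<bar> * \<bar>w $ k\<bar>)"
    unfolding inner_vec_def by (rule order_trans[OF sum_abs]) (simp add: abs_mult)
  also have "\<dots> \<le> (\<Sum>k\<in>UNIV. \<bar>v $ k\<bar> * l1norm w)"
    by (intro sum_mono mult_left_mono abs_nth_le_l1norm) auto
  also have "\<dots> = l1norm v * l1norm w"
    unfolding l1norm_def by (simp add: sum_distrib_right)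
  finally show ?thesis .
qed

lemma l1norm_near_ray:
  assumes "l1norm (v - t *\<^sub>R x) \<le> e" and "t \<ge> 0"
  shows "l1norm v \<le> t * l1norm x + e" and "t * l1norm x - e \<le> l1norm v"
proof -
  show "l1norm v \<le> t * l1norm x + e"
    using l1norm_triangle[of "v - t *\<^sub>R x" "t *\<^sub>R x"] assms by (simp add: l1norm_scaleR)
  show "t * l1norm x - e \<le> l1norm v"
    using l1norm_triangle[of "t *\<^sub>R x - v" v] assms
    by (simp add: l1norm_scaleR l1norm_minus_commute)
qed

lemma idx_vec_nth [simp]: "idx_vec i $ k = real (i k)"
  unfolding idx_vec_def by simp

lemma idx_vec_add: "idx_vec (\<lambda>k. i k + j k) = idx_vec i + idx_vec j"
  by (simp add: vec_eq_iff)

lemma l1norm_idx_vec: "l1norm (idx_vec i) = idx_vec i \<bullet> 1"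
  unfolding l1norm_def inner_vec_def by simp

lemma exp_inner_idx_vec: "exp (idx_vec i \<bullet> v) = (\<Prod>k\<in>UNIV. exp (v $ k) ^ i k)"
proof -
  have "exp (idx_vec i \<bullet> v) = (\<Prod>k\<in>UNIV. exp (real (i k) * v $ k))"
    unfolding inner_vec_def by (simp add: exp_sum)
  then show ?thesis by (simp only: exp_of_nat_mult)
qed

text \<open>Shifted by \<open>\<lceil>x - a\<rceil>\<close>, the lattice points of the ball lie in the box \<open>{0..\<lfloor>2a\<rfloor>}\<^sup>d\<close>.\<close>

lemma l1_ball_idx_vec:
  fixes x :: "real^'d::finite"
  assumes "a \<ge> 0"
  shows "finite {j. l1norm (idx_vec j - x) \<le> a}"
    and "card {j. l1norm (idx_vec j - x) \<le> a} \<le> (nat \<lfloor>2 * a\<rfloor> + 1) ^ CARD('d)"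
proof -
  let ?A = "{j. l1norm (idx_vec j - x) \<le> a}"
  let ?B = "PiE UNIV (\<lambda>_::'d. {..nat \<lfloor>2 * a\<rfloor>})"
  define h where "h j = (\<lambda>k. nat (int (j k) - \<lceil>x $ k - a\<rceil>))" for j :: "'d \<Rightarrow> nat"
  have near: "\<bar>real (j k) - x $ k\<bar> \<le> a" if "j \<in> ?A" for j k
    using abs_nth_le_l1norm[of "idx_vec j - x" k] that by simp
  have low: "\<lceil>x $ k - a\<rceil> \<le> int (j k)" if "j \<in> ?A" for j k
    using near[OF that, of k] by (simp add: ceiling_le_iff)
  have "inj_on h ?A"
  proof (rule inj_onI)
    fix j j' assume "j \<in> ?A" "j' \<in> ?A" "h j = h j'"
    then have "nat (int (j k) - \<lceil>x $ k - a\<rceil>) = nat (int (j' k) - \<lceil>x $ k - a\<rceil>)" for k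
      unfolding h_def by metis
    then have "int (j k) - \<lceil>x $ k - a\<rceil> = int (j' k) - \<lceil>x $ k - a\<rceil>" for k
      using low[of j k] low[of j' k] \<open>j \<in> ?A\<close> \<open>j' \<in> ?A\<close> eq_nat_nat_iff
      by (metis diff_ge_0_iff_ge)
    then show "j = j'" by (auto simp: fun_eq_iff)
  qed
  moreover have "h ` ?A \<subseteq> ?B"
  proof (rule image_subsetI)
    fix j assume j: "j \<in> ?A"
    have "int (j k) - \<lceil>x $ k - a\<rceil> \<le> \<lfloor>2 * a\<rfloor>" for k
      using near[OF j, of k] le_of_int_ceiling[of "x $ k - a"] by linarith
    then show "h j \<in> ?B" unfolding h_def using assms by (auto simp: PiE_UNIV_domain nat_le_iff)
  qed
  moreover have "finite ?B" and "card ?B = (nat \<lfloor>2 * a\<rfloor> + 1) ^ CARD('d)"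
    by (simp_all add: finite_PiE card_PiE)
  ultimately show "finite ?A" and "card ?A \<le> (nat \<lfloor>2 * a\<rfloor> + 1) ^ CARD('d)"
    by (metis finite_imageD finite_subset, metis card_inj_on_le)
qed

lemma exists_ge_average:
  fixes g :: "'a \<Rightarrow> real"
  assumes "finite A" and "A \<noteq> {}"
  obtains j where "j \<in> A" and "sum g A \<le> real (card A) * g j"
proof -
  have "Max (g ` A) \<in> g ` A"
    using assms by simp
  then obtain j where j: "j \<in> A" "g j = Max (g ` A)"
    by auto
  then have "g i \<le> g j" if "i \<in> A" for i
    using assms that by simp
  then have "sum g A \<le> real (card A) * g j"
    using sum_bounded_above[of A g "g j"] by auto
  with \<open>j \<in> A\<close> that show ?thesis by blast
qed

section \<open>Open cones and the indicatrix of growth\<close>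

lemma open_cone_scaleR_iff:
  assumes "open_cone C" and "t > 0"
  shows "t *\<^sub>R x \<in> C \<longleftrightarrow> x \<in> C"
proof
  assume "t *\<^sub>R x \<in> C"
  then have "(1 / t) *\<^sub>R (t *\<^sub>R x) \<in> C"
    using assms unfolding open_cone_def by (metis zero_less_divide_1_iff)
  then show "x \<in> C" using assms(2) by simp
qed (use assms in \<open>auto simp: open_cone_def\<close>)

lemma open_cone_Int: "open_cone A \<Longrightarrow> open_cone B \<Longrightarrow> open_cone (A \<inter> B)"
  unfolding open_cone_def by auto

definition ray_cone :: "real^'d::finite \<Rightarrow> real \<Rightarrow> (real^'d) set" where
  "ray_cone x \<delta> = {v. \<exists>t>0. l1norm (v - t *\<^sub>R x) < \<delta> * t}"

lemma open_cone_ray_cone: "open_cone (ray_cone x \<delta>)"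
proof -
  have "ray_cone x \<delta> = (\<Union>t\<in>{0<..}. {v. l1norm (v - t *\<^sub>R x) < \<delta> * t})"
    unfolding ray_cone_def by auto
  moreover have "open {v. l1norm (v - t *\<^sub>R x) < \<delta> * t}" for t
    by (intro open_Collect_less continuous_intros)
  ultimately have "open (ray_cone x \<delta>)" by auto
  moreover have "s *\<^sub>R v \<in> ray_cone x \<delta>" if v: "v \<in> ray_cone x \<delta>" and s: "s > 0" for v s
  proof -
    obtain t where t: "t > 0" "l1norm (v - t *\<^sub>R x) < \<delta> * t"
      using v unfolding ray_cone_def by auto
    have "l1norm (s *\<^sub>R v - (s * t) *\<^sub>R x) = s * l1norm (v - t *\<^sub>R x)"
      using l1norm_scaleR[of s "v - t *\<^sub>R x"] s by (simp add: algebra_simps)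
    also have "\<dots> < \<delta> * (s * t)" using t s by simp
    finally show ?thesis unfolding ray_cone_def using t s by (auto intro!: exI[of _ "s * t"])
  qed
  ultimately show ?thesis unfolding open_cone_def by auto
qed

lemma ray_cone_self: "\<delta> > 0 \<Longrightarrow> x \<in> ray_cone x \<delta>"
  unfolding ray_cone_def by (auto intro!: exI[of _ 1] simp: l1norm_def)

lemma ray_cone_radius:
  assumes "v \<in> ray_cone x \<delta>" and "\<delta> \<le> l1norm x" and "R \<le> l1norm v" and "l1norm v \<le> R + 1"
  obtains t where "t > 0" and "l1norm (v - t *\<^sub>R x) < \<delta> * t"
    and "\<bar>R - t * l1norm x\<bar> \<le> \<delta> * t + 1" and "R \<le> 2 * l1norm x * t"
proof -
  obtain t where t: "t > 0" "l1norm (v - t *\<^sub>R x) < \<delta> * t"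
    using assms(1) unfolding ray_cone_def by auto
  have "l1norm v \<le> t * l1norm x + \<delta> * t" "t * l1norm x - \<delta> * t \<le> l1norm v"
    using l1norm_near_ray[OF less_imp_le[OF t(2)]] t(1) by auto
  moreover have "\<delta> * t \<le> t * l1norm x" using assms(2) t(1) by (simp add: mult.commute)
  ultimately have "\<bar>R - t * l1norm x\<bar> \<le> \<delta> * t + 1" "R \<le> 2 * (t * l1norm x)"
    using assms(3,4) by linarith+
  then show ?thesis using that t by (simp add: mult.commute mult.left_commute)
qed

lemma open_l1_ballE:
  assumes "open C" and "x \<in> C"
  obtains \<rho> where "\<rho> > 0" and "\<And>v. l1norm (v - x) < \<rho> \<Longrightarrow> v \<in> C"
proof -
  obtain \<rho> where "\<rho> > 0" "ball x \<rho> \<subseteq> C"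
    using assms open_contains_ball by blast
  moreover have "v \<in> ball x \<rho>" if "l1norm (v - x) < \<rho>" for v
    using norm_le_l1norm[of "v - x"] that by (simp add: dist_norm norm_minus_commute)
  ultimately show ?thesis using that by blast
qed

lemma psi_scaleR:
  assumes "t > 0"
  shows "psi f (t *\<^sub>R x) = ereal t * psi f x"
proof (cases "x = 0")
  case False
  have "{C. open_cone C \<and> t *\<^sub>R x \<in> C} = {C. open_cone C \<and> x \<in> C}"
    using open_cone_scaleR_iff[OF _ assms] by auto
  moreover have "ereal (t * l1norm x) = ereal t * ereal (l1norm x)" by simp
  ultimately show ?thesis
    using False assms unfolding psi_def
    by (simp add: l1norm_scaleR mult.assoc del: times_ereal.simps)
qed (simp add: psi_def)

lemma elog_mono: "0 \<le> s \<Longrightarrow> s \<le> s' \<Longrightarrow> elog s \<le> elog s'"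
  unfolding elog_def by auto

lemma elog_pos: "s > 0 \<Longrightarrow> elog s = ereal (ln s)"
  unfolding elog_def by auto

definition annulus :: "(real^'d::finite) set \<Rightarrow> real \<Rightarrow> ('d \<Rightarrow> nat) set" where
  "annulus C R = {i. idx_vec i \<in> C \<and> R \<le> l1norm (idx_vec i) \<and> l1norm (idx_vec i) \<le> R + 1}"

lemma finite_annulus: "finite (annulus C R)"
proof -
  have "annulus C R \<subseteq> {j. l1norm (idx_vec j - 0) \<le> \<bar>R\<bar> + 1}"
    unfolding annulus_def by auto
  then show ?thesis
    using l1_ball_idx_vec(1)[of "\<bar>R\<bar> + 1" 0] finite_subset by fastforce
qed

lemma tau_cone_annulus:
  "tau_cone f C = Limsup at_top (\<lambda>R. ereal (1 / R) * elog (sum f (annulus C R)))"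
  unfolding tau_cone_def annulus_def by simp

lemma tau_cone_mono:
  assumes nonneg: "\<And>i. f i \<ge> 0" and "C \<subseteq> C'"
  shows "tau_cone f C \<le> tau_cone f C'"
  unfolding tau_cone_annulus
proof (rule Limsup_mono)
  show "\<forall>\<^sub>F R in at_top. ereal (1 / R) * elog (sum f (annulus C R))
                          \<le> ereal (1 / R) * elog (sum f (annulus C' R))"
  proof (rule eventually_mono[OF eventually_gt_at_top[of 0]])
    fix R :: real assume "R > 0"
    have "annulus C R \<subseteq> annulus C' R" using assms(2) unfolding annulus_def by auto
    then have "sum f (annulus C R) \<le> sum f (annulus C' R)"
      by (intro sum_mono2 finite_annulus) (auto simp: nonneg)
    then show "ereal (1 / R) * elog (sum f (annulus C R)) \<le> ereal (1 / R) * elog (sum f (annulus C' R))"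
      using \<open>R > 0\<close> by (intro ereal_mult_left_mono elog_mono sum_nonneg) (auto simp: nonneg)
  qed
qed

lemma psi_le_tau_cone:
  assumes "x \<noteq> 0" and "open_cone C" and "x \<in> C"
  shows "psi f x \<le> ereal (l1norm x) * tau_cone f C"
  using assms unfolding psi_def by (auto intro!: ereal_mult_left_mono INF_lower l1norm_nonneg)

lemma psi_geI:
  assumes "x \<noteq> 0" and "\<And>C. open_cone C \<Longrightarrow> x \<in> C \<Longrightarrow> tau_cone f C \<ge> ereal \<beta>"
  shows "psi f x \<ge> ereal (l1norm x * \<beta>)"
proof -
  have "ereal (l1norm x) * ereal \<beta> \<le> ereal (l1norm x) * (INF C\<in>{C. open_cone C \<and> x \<in> C}. tau_cone f C)"
    using assms(2) by (intro ereal_mult_left_mono INF_greatest) (auto simp: l1norm_nonneg)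
  then show ?thesis using assms(1) unfolding psi_def by simp
qed

lemma psi_lessE:
  assumes "x \<noteq> 0" and "psi f x < ereal r"
  obtains C where "open_cone C" and "x \<in> C" and "ereal (l1norm x) * tau_cone f C < ereal r"
proof -
  let ?I = "INF C\<in>{C. open_cone C \<and> x \<in> C}. tau_cone f C"
  have n: "l1norm x > 0" using l1norm_pos[OF assms(1)] .
  have "?I < ereal (r / l1norm x)"
  proof (cases ?I)
    case (real u)
    then have "l1norm x * u < r" using assms unfolding psi_def by simp
    then show ?thesis using real n by (simp add: field_simps)
  qed (use assms n in \<open>auto simp: psi_def\<close>)
  then obtain C where C: "open_cone C" "x \<in> C" "tau_cone f C < ereal (r / l1norm x)"
    by (auto simp: INF_less_iff)
  have "ereal (l1norm x) * tau_cone f C < ereal r"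
  proof (cases "tau_cone f C")
    case (real u)
    then show ?thesis using C(3) n by (simp add: field_simps)
  qed (use C n in auto)
  then show ?thesis using that C by blast
qed

lemma ereal_le_epsilonI:
  assumes "\<And>e. e > 0 \<Longrightarrow> ereal (v - e) \<le> L"
  shows "ereal v \<le> L"
proof (cases L)
  case (real l)
  have "v \<le> l"
  proof (rule field_le_epsilon)
    fix e :: real assume "e > 0"
    then show "v \<le> l + e" using assms[of e] real by simp
  qed
  then show ?thesis using real by simp
qed (use assms[of 1] in simp_all)

lemma Limsup_at_top_geI:
  fixes g :: "real \<Rightarrow> ereal"
  assumes "\<And>M. \<exists>R\<ge>M. g R \<ge> w"
  shows "Limsup at_top g \<ge> w"
proof (rule ccontr)
  assume "\<not> ?thesis"
  then have "eventually (\<lambda>R. g R < w) at_top" using Limsup_lessD by (metis not_le)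
  then obtain M where "\<And>R. R \<ge> M \<Longrightarrow> g R < w" by (auto simp: eventually_at_top_linorder)
  then show False using assms[of M] by (meson not_le)
qed

lemma Limsup_at_top_gtD:
  fixes g :: "real \<Rightarrow> ereal"
  assumes "Limsup at_top g > w"
  shows "\<exists>R\<ge>M. g R > w"
proof (rule ccontr)
  assume "\<not> ?thesis"
  then have "eventually (\<lambda>R. g R \<le> w) at_top" by (auto simp: eventually_at_top_linorder not_less)
  then have "Limsup at_top g \<le> w" by (rule Limsup_bounded)
  then show False using assms by simp
qed

section \<open>Boundedness and upper semicontinuity of \<open>\<psi>\<close>\<close>

definition tau_nu :: "(('d::finite \<Rightarrow> nat) \<Rightarrow> real) \<Rightarrow> ereal" where
  "tau_nu f = (SUP x\<in>{x :: real^'d. l1norm x = 1}. psi f x)"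

lemma psi_le_linear:
  fixes f :: "('d::finite \<Rightarrow> nat) \<Rightarrow> real"
  assumes "tau_nu f < \<infinity>"
  obtains B where "\<And>x. psi f x \<le> ereal (B * l1norm x)"
proof -
  obtain B where B: "tau_nu f \<le> ereal B" "B \<ge> 0"
  proof (cases "tau_nu f")
    case (real r) then show ?thesis using that[of "max r 0"] by auto
  qed (use assms that[of 0] in auto)
  have "psi f x \<le> ereal (B * l1norm x)" for x
  proof (cases "x = 0")
    case False
    let ?u = "(1 / l1norm x) *\<^sub>R x"
    have n: "l1norm x > 0" using l1norm_pos[OF False] .
    then have "l1norm ?u = 1" by (simp add: l1norm_scaleR)
    then have "psi f ?u \<le> ereal B"
      using B unfolding tau_nu_def by (metis (mono_tags) SUP_upper mem_Collect_eq order_trans)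
    moreover have "psi f x = ereal (l1norm x) * psi f ?u"
      using psi_scaleR[OF n, of f ?u] n by simp
    moreover have "ereal (l1norm x) * psi f ?u \<le> ereal (l1norm x) * ereal B"
      using \<open>psi f ?u \<le> ereal B\<close> n by (intro ereal_mult_left_mono) auto
    ultimately show ?thesis by (simp add: mult.commute)
  qed (simp add: psi_def l1norm_def)
  then show ?thesis using that by blast
qed

lemma psi_upper_semicontinuous:
  fixes f :: "('d::finite \<Rightarrow> nat) \<Rightarrow> real"
  assumes "tau_nu f < \<infinity>" and "psi f x < ereal r"
  obtains U where "open U" and "x \<in> U" and "\<And>y. y \<in> U \<Longrightarrow> psi f y < ereal r"
proof (cases "x = 0")
  case True
  obtain B where B: "\<And>x. psi f x \<le> ereal (B * l1norm x)"
    using psi_le_linear[OF assms(1)] by blast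
  have "r > 0" using assms(2) True by (simp add: psi_def)
  then have "x \<in> {y. B * l1norm y < r}" using True by (simp add: l1norm_def)
  moreover have "psi f y < ereal r" if "y \<in> {y. B * l1norm y < r}" for y
    using B[of y] that by (simp add: le_less_trans)
  ultimately show ?thesis
    using that[of "{y. B * l1norm y < r}"] by (force intro: open_Collect_less continuous_intros)
next
  case False
  obtain C where C: "open_cone C" "x \<in> C" "ereal (l1norm x) * tau_cone f C < ereal r"
    using psi_lessE[OF False assms(2)] by blast
  have "open C" using C(1) unfolding open_cone_def by simp
  obtain U where U: "open U" "x \<in> U" "U \<subseteq> C - {0}"
    and below: "\<And>y. y \<in> U \<Longrightarrow> ereal (l1norm y) * tau_cone f C < ereal r"
  proof (cases "tau_cone f C")
    case (real u)
    have "open {y. l1norm y * u < r}" by (intro open_Collect_less continuous_intros)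
    then show ?thesis
      using that[of "(C - {0}) \<inter> {y. l1norm y * u < r}"] C real \<open>open C\<close> False
      by (auto simp: open_delete)
  next
    case MInf
    then show ?thesis
      using that[of "C - {0}"] C(2) \<open>open C\<close> False by (auto simp: open_delete l1norm_eq_0_iff l1norm_pos)
  qed (use C(3) l1norm_pos[OF False] in simp)
  show ?thesis
  proof (rule that[OF U(1,2)])
    fix y assume "y \<in> U"
    then show "psi f y < ereal r"
      using psi_le_tau_cone[OF _ C(1), of y f] U(3) below by (auto intro: le_less_trans)
  qed
qed

definition psi_hypograph :: "(('d::finite \<Rightarrow> nat) \<Rightarrow> real) \<Rightarrow> ((real^'d) \<times> real) set" where
  "psi_hypograph f = {(y, s). ereal s \<le> psi f y}"

lemma closed_psi_hypograph:
  fixes f :: "('d::finite \<Rightarrow> nat) \<Rightarrow> real"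
  assumes "tau_nu f < \<infinity>"
  shows "closed (psi_hypograph f)"
  unfolding closed_def
proof (rule open_prod_intro)
  fix p assume "p \<in> - psi_hypograph f"
  then obtain y s where p: "p = (y, s)" and "psi f y < ereal s"
    unfolding psi_hypograph_def by (cases p) auto
  then obtain r where r: "psi f y < ereal r" "r < s"
    by (metis ereal_dense2 less_ereal.simps(1))
  obtain U where U: "open U" "y \<in> U" "\<And>z. z \<in> U \<Longrightarrow> psi f z < ereal r"
    using psi_upper_semicontinuous[OF assms r(1)] by blast
  have "U \<times> {r<..} \<subseteq> - psi_hypograph f"
    using U(3) unfolding psi_hypograph_def by (force dest: order.strict_trans1[rotated])
  then show "\<exists>A B. open A \<and> open B \<and> p \<in> A \<times> B \<and> A \<times> B \<subseteq> - psi_hypograph f"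
    using U r p by (intro exI[of _ U] exI[of _ "{r<..}"]) auto
qed

section \<open>Growth rates along a direction\<close>

locale nonneg_series =
  fixes f :: "('d::finite \<Rightarrow> nat) \<Rightarrow> real"
  assumes nonneg: "f i \<ge> 0"
begin

text \<open>For \<open>x \<noteq> 0\<close>, \<open>\<psi> x\<close> is the supremum of the rates \<open>\<alpha>\<close> for which \<open>f\<close> grows frequently
  along \<open>x\<close>.\<close>

definition grows_frequently :: "real^'d \<Rightarrow> real \<Rightarrow> bool" where
  "grows_frequently x \<alpha> \<longleftrightarrow> (\<forall>\<delta>>0. \<forall>M. \<exists>r T. T \<ge> M \<and> T > 0 \<and> l1norm (idx_vec r - T *\<^sub>R x) \<le> \<delta> * T
      \<and> f r > 0 \<and> ln (f r) \<ge> T * (\<alpha> - \<delta>))"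

definition grows_eventually :: "real^'d \<Rightarrow> real \<Rightarrow> bool" where
  "grows_eventually x \<alpha> \<longleftrightarrow> (\<forall>\<delta>>0. \<exists>M. \<forall>T\<ge>M. \<exists>r. l1norm (idx_vec r - T *\<^sub>R x) \<le> \<delta> * T
      \<and> f r > 0 \<and> ln (f r) \<ge> T * (\<alpha> - \<delta>))"

lemma grows_eventually_imp_frequently:
  assumes "grows_eventually x \<alpha>"
  shows "grows_frequently x \<alpha>"
  unfolding grows_frequently_def
proof (intro allI impI)
  fix \<delta> M :: real assume "\<delta> > 0"
  then obtain M' where M': "\<And>T. T \<ge> M' \<Longrightarrow> \<exists>r. l1norm (idx_vec r - T *\<^sub>R x) \<le> \<delta> * T
      \<and> f r > 0 \<and> ln (f r) \<ge> T * (\<alpha> - \<delta>)"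
    using assms unfolding grows_eventually_def by blast
  let ?T = "max (max M M') 1"
  obtain r where "l1norm (idx_vec r - ?T *\<^sub>R x) \<le> \<delta> * ?T" "f r > 0" "ln (f r) \<ge> ?T * (\<alpha> - \<delta>)"
    using M'[of ?T] by (auto simp: le_max_iff_disj)
  then show "\<exists>r T. T \<ge> M \<and> T > 0 \<and> l1norm (idx_vec r - T *\<^sub>R x) \<le> \<delta> * T \<and> f r > 0 \<and> ln (f r) \<ge> T * (\<alpha> - \<delta>)"
    by (intro exI[of _ r] exI[of _ ?T]) auto
qed

lemma grows_frequently_nonneg:
  assumes "grows_frequently x \<alpha>"
  shows "x $ k \<ge> 0"
proof (rule ccontr)
  assume "\<not> x $ k \<ge> 0"
  then have "- x $ k / 2 > 0" by simp
  then obtain r T where "T > 0" "l1norm (idx_vec r - T *\<^sub>R x) \<le> (- x $ k / 2) * T"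
    using assms unfolding grows_frequently_def by blast
  moreover have "real (r k) - T * x $ k \<le> l1norm (idx_vec r - T *\<^sub>R x)"
    using abs_nth_le_l1norm[of "idx_vec r - T *\<^sub>R x" k] by simp
  moreover have "T * x $ k < 0" using \<open>T > 0\<close> \<open>\<not> x $ k \<ge> 0\<close> by (simp add: mult_pos_neg)
  moreover have "(- x $ k / 2) * T = - (T * x $ k) / 2" by simp
  ultimately show False using of_nat_0_le_iff[of "r k"] by linarith
qed

end

lemma ratio_lower_bound:
  fixes R T n \<delta> \<alpha> L :: real
  assumes "R > 0" and "T > 0" and "T * (n - \<delta>) \<le> R" and "R \<le> T * (n + \<delta>)" and "n - \<delta> > 0"
    and "L \<ge> T * (\<alpha> - \<delta>)"
  shows "L / R \<ge> min ((\<alpha> - \<delta>) / (n + \<delta>)) ((\<alpha> - \<delta>) / (n - \<delta>))"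
proof -
  have "T * (\<alpha> - \<delta>) / R \<ge> min ((\<alpha> - \<delta>) / (n + \<delta>)) ((\<alpha> - \<delta>) / (n - \<delta>))"
  proof (cases "\<alpha> - \<delta> \<ge> 0")
    case True
    have "T * (\<alpha> - \<delta>) / (T * (n + \<delta>)) \<le> T * (\<alpha> - \<delta>) / R"
      using True assms by (intro divide_left_mono) auto
    then show ?thesis using \<open>T > 0\<close> by simp
  next
    case False
    have "T * (\<alpha> - \<delta>) / (T * (n - \<delta>)) \<le> T * (\<alpha> - \<delta>) / R"
      using False assms by (intro divide_left_mono_neg mult_nonneg_nonpos) auto
    then show ?thesis using \<open>T > 0\<close> by simp
  qed
  moreover have "T * (\<alpha> - \<delta>) / R \<le> L / R" using assms by (simp add: divide_right_mono)
  ultimately show ?thesis by linarith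
qed

context nonneg_series
begin

lemma tau_cone_ge_if_grows_frequently:
  assumes grows: "grows_frequently x \<alpha>" and C: "open_cone C"
    and ball: "\<And>v. l1norm (v - x) < \<rho> \<Longrightarrow> v \<in> C"
    and \<delta>: "0 < \<delta>" "\<delta> < \<rho>" "\<delta> < l1norm x / 2"
  shows "tau_cone f C \<ge> ereal (min ((\<alpha> - \<delta>) / (l1norm x + \<delta>)) ((\<alpha> - \<delta>) / (l1norm x - \<delta>)))"
    (is "_ \<ge> ereal ?m")
  unfolding tau_cone_annulus
proof (rule Limsup_at_top_geI)
  fix M :: real
  define n where "n = l1norm x"
  have n: "n > 0" using \<delta> unfolding n_def by linarith
  obtain r T where rT: "T \<ge> 2 * \<bar>M\<bar> / n + 1" "T > 0" "l1norm (idx_vec r - T *\<^sub>R x) \<le> \<delta> * T"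
    "f r > 0" "ln (f r) \<ge> T * (\<alpha> - \<delta>)"
    using grows \<delta>(1) unfolding grows_frequently_def by blast
  define R where "R = l1norm (idx_vec r)"
  have R: "T * (n - \<delta>) \<le> R" "R \<le> T * (n + \<delta>)"
    using l1norm_near_ray[OF rT(3)] rT(2) unfolding R_def n_def by (auto simp: algebra_simps)
  have "T * (n / 2) \<le> T * (n - \<delta>)"
    using \<delta>(3) rT(2) unfolding n_def by (intro mult_left_mono) auto
  then have "T * n / 2 \<le> R" using R(1) by simp
  moreover have "T * n / 2 \<ge> \<bar>M\<bar> + n / 2" using rT(1) n by (simp add: field_simps)
  ultimately have RM: "R \<ge> M" "R > 0" using n by linarith+
  have "l1norm ((1 / T) *\<^sub>R idx_vec r - x) = (1 / T) * l1norm (idx_vec r - T *\<^sub>R x)"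
    using l1norm_scaleR[of "1 / T" "idx_vec r - T *\<^sub>R x"] rT(2) by (simp add: algebra_simps)
  also have "\<dots> \<le> \<delta>" using rT(2,3) by (simp add: field_simps)
  finally have "(1 / T) *\<^sub>R idx_vec r \<in> C" using ball \<delta>(2) by simp
  then have "r \<in> annulus C R"
    using open_cone_scaleR_iff[OF C, of "1 / T"] rT(2) unfolding annulus_def R_def by simp
  then have S: "f r \<le> sum f (annulus C R)"
    using finite_annulus by (intro member_le_sum) (auto simp: nonneg)
  have nd: "n - \<delta> > 0" using \<delta>(1,3) unfolding n_def by linarith
  have "?m \<le> ln (f r) / R"
    using ratio_lower_bound[OF RM(2) rT(2) R nd rT(5)] unfolding n_def .
  also have "\<dots> \<le> ln (sum f (annulus C R)) / R"
    using S rT(4) RM(2) by (simp add: divide_right_mono)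
  finally have "ereal ?m \<le> ereal (ln (sum f (annulus C R)) / R)"
    by (simp only: ereal_less_eq(3))
  also have "\<dots> = ereal (1 / R) * elog (sum f (annulus C R))"
    using S rT(4) by (simp add: elog_pos)
  finally have "ereal ?m \<le> ereal (1 / R) * elog (sum f (annulus C R))" .
  then show "\<exists>R\<ge>M. ereal ?m \<le> ereal (1 / R) * elog (sum f (annulus C R))"
    using RM by blast
qed

lemma grows_frequently_imp_psi_ge:
  assumes grows: "grows_frequently x \<alpha>" and "x \<noteq> 0"
  shows "psi f x \<ge> ereal \<alpha>"
proof -
  define n where "n = l1norm x"
  have n: "n > 0" unfolding n_def using l1norm_pos[OF \<open>x \<noteq> 0\<close>] .
  have "tau_cone f C \<ge> ereal (\<alpha> / n)" if C: "open_cone C" "x \<in> C" for C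
  proof (rule ereal_le_epsilonI)
    fix \<epsilon> :: real assume "\<epsilon> > 0"
    obtain \<rho> where \<rho>: "\<rho> > 0" "\<And>v. l1norm (v - x) < \<rho> \<Longrightarrow> v \<in> C"
      using open_l1_ballE[of C x] C unfolding open_cone_def by blast
    have "((\<lambda>\<delta>. min ((\<alpha> - \<delta>) / (n + \<delta>)) ((\<alpha> - \<delta>) / (n - \<delta>))) \<longlongrightarrow>
        min ((\<alpha> - 0) / (n + 0)) ((\<alpha> - 0) / (n - 0))) (at_right 0)"
      using n by (intro tendsto_intros) auto
    then have "\<forall>\<^sub>F \<delta> in at_right 0. min ((\<alpha> - \<delta>) / (n + \<delta>)) ((\<alpha> - \<delta>) / (n - \<delta>)) > \<alpha> / n - \<epsilon>"
      using \<open>\<epsilon> > 0\<close> by (intro order_tendstoD(1)) auto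
    moreover have "\<forall>\<^sub>F \<delta> in at_right 0. \<delta> < min \<rho> (n / 2)"
      using \<rho>(1) n by (intro order_tendstoD(2)[OF tendsto_ident_at]) auto
    moreover have "\<forall>\<^sub>F \<delta> in at_right (0::real). 0 < \<delta>"
      by (rule eventually_at_right_less)
    ultimately have "\<forall>\<^sub>F \<delta> in at_right 0. min ((\<alpha> - \<delta>) / (n + \<delta>)) ((\<alpha> - \<delta>) / (n - \<delta>)) > \<alpha> / n - \<epsilon>
        \<and> \<delta> < min \<rho> (n / 2) \<and> 0 < \<delta>"
      by (intro eventually_conj)
    then obtain \<delta> where \<delta>: "min ((\<alpha> - \<delta>) / (n + \<delta>)) ((\<alpha> - \<delta>) / (n - \<delta>)) > \<alpha> / n - \<epsilon>"
      "0 < \<delta>" "\<delta> < \<rho>" "\<delta> < n / 2"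
      using eventually_happens'[of "at_right (0::real)"] by auto
    have "ereal (\<alpha> / n - \<epsilon>) \<le> ereal (min ((\<alpha> - \<delta>) / (n + \<delta>)) ((\<alpha> - \<delta>) / (n - \<delta>)))"
      using \<delta>(1) by simp
    also have "\<dots> \<le> tau_cone f C"
      using tau_cone_ge_if_grows_frequently[OF grows C(1) \<rho>(2) \<delta>(2,3)] \<delta>(4) unfolding n_def by simp
    finally show "ereal (\<alpha> / n - \<epsilon>) \<le> tau_cone f C" .
  qed
  then have "psi f x \<ge> ereal (l1norm x * (\<alpha> / n))" using psi_geI[OF \<open>x \<noteq> 0\<close>] by blast
  then show ?thesis using n unfolding n_def by simp
qed

end

lemma rate_along_ray_arith:
  fixes L R t n \<alpha> \<delta> \<delta>' E :: real
  assumes "n > 0" and "t > 0" and "\<delta> > 0" and "\<bar>R - t * n\<bar> \<le> \<delta>' * t + 1" and "R \<le> 2 * n * t"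
    and "L \<ge> R * \<alpha> / n - E" and "\<delta>' * \<bar>\<alpha>\<bar> / n \<le> \<delta> / 2" and "\<bar>\<alpha>\<bar> / n + E \<le> R * \<delta> / (4 * n)"
  shows "L \<ge> t * (\<alpha> - \<delta>)"
proof -
  have "R * \<alpha> / n - t * \<alpha> = (R - t * n) * \<alpha> / n"
    using assms(1) by (simp add: field_simps)
  then have "\<bar>R * \<alpha> / n - t * \<alpha>\<bar> = \<bar>R - t * n\<bar> * \<bar>\<alpha>\<bar> / n"
    using assms(1) by (simp add: abs_mult abs_divide)
  also have "\<dots> \<le> (\<delta>' * t + 1) * \<bar>\<alpha>\<bar> / n"
    using assms(1,4) by (intro divide_right_mono mult_right_mono) auto
  also have "\<dots> = t * (\<delta>' * \<bar>\<alpha>\<bar> / n) + \<bar>\<alpha>\<bar> / n"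
    by (simp add: algebra_simps add_divide_distrib)
  also have "\<dots> \<le> t * (\<delta> / 2) + \<bar>\<alpha>\<bar> / n"
    using assms(2,7) by (intro add_right_mono mult_left_mono) auto
  finally have "R * \<alpha> / n \<ge> t * \<alpha> - t * (\<delta> / 2) - \<bar>\<alpha>\<bar> / n" by linarith
  moreover have "R * \<delta> / (4 * n) \<le> t * (\<delta> / 2)"
  proof -
    have "R * \<delta> / (4 * n) \<le> (2 * n * t) * \<delta> / (4 * n)"
      using assms(1,3,5) by (intro divide_right_mono mult_right_mono) auto
    then show ?thesis using assms(1) by (simp add: field_simps)
  qed
  ultimately show ?thesis using assms(6,8) by (simp add: algebra_simps)
qed

context nonneg_series
begin

lemma annulus_heavy_point:
  assumes "R \<ge> 0" and "sum f (annulus C R) > 0"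
  obtains r where "r \<in> annulus C R" and "f r > 0"
    and "ln (f r) \<ge> ln (sum f (annulus C R)) - CARD('d) * ln (2 * R + 3)"
proof -
  let ?A = "annulus C R"
  have "?A \<noteq> {}" using assms(2) by auto
  then obtain r where r: "r \<in> ?A" "sum f ?A \<le> card ?A * f r"
    using exists_ge_average[OF finite_annulus] by blast
  have "?A \<subseteq> {j. l1norm (idx_vec j - 0) \<le> R + 1}" unfolding annulus_def by auto
  moreover have "finite {j. l1norm (idx_vec j - (0 :: real^'d)) \<le> R + 1}"
    and "card {j. l1norm (idx_vec j - (0 :: real^'d)) \<le> R + 1} \<le> (nat \<lfloor>2 * (R + 1)\<rfloor> + 1) ^ CARD('d)"
    using l1_ball_idx_vec[of "R + 1" "0 :: real^'d"] assms(1) by auto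
  ultimately have "card ?A \<le> (nat \<lfloor>2 * (R + 1)\<rfloor> + 1) ^ CARD('d)"
    by (meson card_mono le_trans)
  then have "real (card ?A) \<le> real (nat \<lfloor>2 * (R + 1)\<rfloor> + 1) ^ CARD('d)"
    by (metis of_nat_le_iff of_nat_power)
  also have "\<dots> \<le> (2 * R + 3) ^ CARD('d)"
    using assms(1) of_int_floor_le[of "2 * (R + 1)"] by (intro power_mono) auto
  finally have card: "real (card ?A) \<le> (2 * R + 3) ^ CARD('d)" .
  have "card ?A > 0" using \<open>?A \<noteq> {}\<close> finite_annulus card_gt_0_iff by blast
  moreover have "0 < card ?A * f r" using r(2) assms(2) by linarith
  ultimately have "f r > 0" by (simp add: zero_less_mult_iff)
  have "ln (sum f ?A) \<le> ln (card ?A * f r)"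
    using r(2) assms(2) by simp
  also have "\<dots> = ln (card ?A) + ln (f r)"
    using \<open>card ?A > 0\<close> \<open>f r > 0\<close> by (simp add: ln_mult)
  also have "ln (card ?A) \<le> CARD('d) * ln (2 * R + 3)"
    using card \<open>card ?A > 0\<close> assms(1) by (simp flip: ln_realpow)
  finally show ?thesis using that r(1) \<open>f r > 0\<close> by simp
qed

lemma tau_cone_gt_imp_heavy_points:
  assumes "tau_cone f C > ereal \<beta>"
  obtains R r where "R \<ge> M" and "R \<ge> 1" and "r \<in> annulus C R" and "f r > 0"
    and "ln (f r) \<ge> R * \<beta> - CARD('d) * ln (2 * R + 3)"
proof -
  obtain R where R: "R \<ge> max M 1" "ereal (1 / R) * elog (sum f (annulus C R)) > ereal \<beta>"
    using Limsup_at_top_gtD[OF assms[unfolded tau_cone_annulus]] by blast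
  have "sum f (annulus C R) \<noteq> 0" using R by (auto simp: elog_def)
  then have S: "sum f (annulus C R) > 0" using sum_nonneg[of _ f] nonneg by (simp add: order_less_le)
  then have "R * \<beta> < ln (sum f (annulus C R))" using R by (simp add: elog_pos field_simps)
  moreover obtain r where "r \<in> annulus C R" "f r > 0"
    "ln (f r) \<ge> ln (sum f (annulus C R)) - CARD('d) * ln (2 * R + 3)"
    using annulus_heavy_point[OF _ S] R(1) by auto
  ultimately show ?thesis using that[of R r] R(1) by auto
qed

text \<open>Passing from annulus sums to single coefficients loses only the polynomial factor
  \<open>(2R + 3)\<^sup>d\<close>, which is invisible at exponential scale.\<close>

lemma psi_gt_imp_grows_frequently:
  assumes "x \<noteq> 0" and "psi f x > ereal \<alpha>"
  shows "grows_frequently x \<alpha>"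
  unfolding grows_frequently_def
proof (intro allI impI)
  fix \<delta> M :: real assume "\<delta> > 0"
  define n where "n = l1norm x"
  have n: "n > 0" unfolding n_def using l1norm_pos[OF \<open>x \<noteq> 0\<close>] .
  define D where "D = real CARD('d)"
  have "((\<lambda>\<delta>'. \<delta>' * \<bar>\<alpha>\<bar> / n) \<longlongrightarrow> 0 * \<bar>\<alpha>\<bar> / n) (at_right 0)"
    using n by (intro tendsto_intros tendsto_ident_at) auto
  then have "\<forall>\<^sub>F \<delta>' in at_right 0. \<delta>' * \<bar>\<alpha>\<bar> / n < \<delta> / 2"
    using \<open>\<delta> > 0\<close> by (intro order_tendstoD(2)) auto
  moreover have "\<forall>\<^sub>F \<delta>' in at_right 0. \<delta>' < min \<delta> n"
    using \<open>\<delta> > 0\<close> n by (intro order_tendstoD(2)[OF tendsto_ident_at]) auto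
  moreover have "\<forall>\<^sub>F \<delta>' in at_right (0::real). 0 < \<delta>'"
    by (rule eventually_at_right_less)
  ultimately have "\<forall>\<^sub>F \<delta>' in at_right 0. \<delta>' * \<bar>\<alpha>\<bar> / n < \<delta> / 2 \<and> \<delta>' < min \<delta> n \<and> 0 < \<delta>'"
    by (intro eventually_conj)
  then obtain \<delta>' where \<delta>': "\<delta>' * \<bar>\<alpha>\<bar> / n < \<delta> / 2" "\<delta>' < \<delta>" "\<delta>' < n" "0 < \<delta>'"
    using eventually_happens'[of "at_right (0::real)"] by auto
  let ?C = "ray_cone x \<delta>'"
  have "ereal \<alpha> < ereal n * tau_cone f ?C"
    using psi_le_tau_cone[OF \<open>x \<noteq> 0\<close> open_cone_ray_cone ray_cone_self[OF \<delta>'(4)], where f=f] assms(2)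
    unfolding n_def by order
  then have tau: "tau_cone f ?C > ereal (\<alpha> / n)"
    using n by (cases "tau_cone f ?C") (auto simp: field_simps)
  have "((\<lambda>R. (\<bar>\<alpha>\<bar> / n + D * ln (2 * R + 3)) / R) \<longlongrightarrow> 0) at_top"
    by real_asymp
  then have "\<forall>\<^sub>F R in at_top. (\<bar>\<alpha>\<bar> / n + D * ln (2 * R + 3)) / R < \<delta> / (4 * n)"
    using \<open>\<delta> > 0\<close> n by (intro order_tendstoD(2)) auto
  then obtain R0 where R0: "\<And>R. R \<ge> R0 \<Longrightarrow> (\<bar>\<alpha>\<bar> / n + D * ln (2 * R + 3)) / R < \<delta> / (4 * n)"
    by (auto simp: eventually_at_top_linorder)
  obtain R r where R: "R \<ge> max R0 (2 * n * (\<bar>M\<bar> + 1))" "R \<ge> 1"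
    and r: "r \<in> annulus ?C R" "f r > 0" "ln (f r) \<ge> R * (\<alpha> / n) - D * ln (2 * R + 3)"
    unfolding D_def by (rule tau_cone_gt_imp_heavy_points[OF tau])
  obtain t where t: "t > 0" "l1norm (idx_vec r - t *\<^sub>R x) < \<delta>' * t"
    and near: "\<bar>R - t * n\<bar> \<le> \<delta>' * t + 1" and "R \<le> 2 * n * t"
    using ray_cone_radius[of "idx_vec r" x \<delta>' R] r(1) \<delta>'(3) unfolding annulus_def n_def by auto
  then have "(2 * n) * (\<bar>M\<bar> + 1) \<le> (2 * n) * t" using R(1) by simp
  then have "t \<ge> M" using n by (simp add: mult_le_cancel_left_pos)
  have "\<bar>\<alpha>\<bar> / n + D * ln (2 * R + 3) \<le> R * \<delta> / (4 * n)"
    using R0[of R] R by (simp add: field_simps)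
  moreover have "ln (f r) \<ge> R * \<alpha> / n - D * ln (2 * R + 3)" using r(3) by simp
  ultimately have "ln (f r) \<ge> t * (\<alpha> - \<delta>)"
    using rate_along_ray_arith[OF n t(1) \<open>\<delta> > 0\<close> near \<open>R \<le> 2 * n * t\<close> _ less_imp_le[OF \<delta>'(1)]]
    by blast
  moreover have "\<delta>' * t \<le> \<delta> * t" using \<delta>'(2) t(1) by (intro mult_right_mono) auto
  then have "l1norm (idx_vec r - t *\<^sub>R x) \<le> \<delta> * t" using t(2) by linarith
  ultimately show "\<exists>r T. T \<ge> M \<and> T > 0 \<and> l1norm (idx_vec r - T *\<^sub>R x) \<le> \<delta> * T \<and> f r > 0 \<and> ln (f r) \<ge> T * (\<alpha> - \<delta>)"
    using \<open>t \<ge> M\<close> t(1) r(2) by blast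
qed

end

section \<open>Concave growth makes \<open>\<psi>\<close> superadditive\<close>

definition concave_growth :: "(('d::finite \<Rightarrow> nat) \<Rightarrow> real) \<Rightarrow> bool" where
  "concave_growth f \<longleftrightarrow> (\<exists>a>0. \<exists>b>0. \<exists>c>0. \<forall>x y :: real^'d.
     nu_ball f (x + y) a \<ge> c * nu_ball f x b * nu_ball f y b)"

lemma l1norm_near_multiple_ray:
  fixes j r x :: "real^'d::finite"
  assumes "l1norm (j - k *\<^sub>R r) \<le> k * a" and "l1norm (r - T\<^sub>0 *\<^sub>R x) \<le> e"
    and "\<bar>k * T\<^sub>0 - T\<bar> \<le> T\<^sub>0" and "k \<ge> 0"
  shows "l1norm (j - T *\<^sub>R x) \<le> k * a + k * e + T\<^sub>0 * l1norm x"
proof -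
  have "j - T *\<^sub>R x = (j - k *\<^sub>R r) + k *\<^sub>R (r - T\<^sub>0 *\<^sub>R x) + (k * T\<^sub>0 - T) *\<^sub>R x"
    by (simp add: algebra_simps)
  then have "l1norm (j - T *\<^sub>R x) \<le> l1norm (j - k *\<^sub>R r) + l1norm (k *\<^sub>R (r - T\<^sub>0 *\<^sub>R x))
      + l1norm ((k * T\<^sub>0 - T) *\<^sub>R x)"
    by (simp only: l1norm_triangle3)
  also have "\<dots> = l1norm (j - k *\<^sub>R r) + k * l1norm (r - T\<^sub>0 *\<^sub>R x) + \<bar>k * T\<^sub>0 - T\<bar> * l1norm x"
    using assms(4) by (simp add: l1norm_scaleR)
  also have "\<dots> \<le> k * a + k * e + T\<^sub>0 * l1norm x"
    using assms by (intro add_mono mult_left_mono mult_right_mono l1norm_nonneg) auto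
  finally show ?thesis .
qed

lemma nat_multiple_approx:
  fixes T T\<^sub>0 :: real
  assumes "T\<^sub>0 > 0" and "T \<ge> T\<^sub>0"
  obtains k :: nat where "k > 0" and "real k * T\<^sub>0 \<le> T" and "T < real k * T\<^sub>0 + T\<^sub>0"
proof -
  define k where "k = nat \<lfloor>T / T\<^sub>0\<rfloor>"
  have "T / T\<^sub>0 \<ge> 1" using assms by simp
  then have "k > 0" and "real k \<le> T / T\<^sub>0" "T / T\<^sub>0 < real k + 1"
    unfolding k_def by linarith+
  then show ?thesis using that assms(1) by (simp add: field_simps)
qed

lemma mult_ge_approx_below:
  fixes K T T\<^sub>0 \<gamma> :: real
  assumes "K \<le> T" and "T < K + T\<^sub>0" and "T\<^sub>0 > 0"
  shows "K * \<gamma> \<ge> T * \<gamma> - T\<^sub>0 * \<bar>\<gamma>\<bar>"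
proof (cases "\<gamma> \<ge> 0")
  case True
  have "(T - T\<^sub>0) * \<gamma> \<le> K * \<gamma>" using assms True by (intro mult_right_mono) auto
  then show ?thesis using True by (simp add: algebra_simps)
next
  case False
  have "T * \<gamma> \<le> K * \<gamma>" using assms False by (intro mult_right_mono_neg) auto
  moreover have "T\<^sub>0 * \<bar>\<gamma>\<bar> \<ge> 0" using assms(3) by simp
  ultimately show ?thesis by linarith
qed

context nonneg_series
begin

lemma nu_ball_ge_point: "b \<ge> 0 \<Longrightarrow> f p \<le> nu_ball f (idx_vec p) b"
  unfolding nu_ball_def using l1_ball_idx_vec(1)[of b "idx_vec p"]
  by (intro member_le_sum) (auto simp: nonneg l1norm_def)

lemma concave_growth_pointwise:
  assumes "concave_growth f"
  obtains a \<kappa> where "a > 0" and "\<kappa> > 0" and "\<kappa> \<le> 1"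
    and "\<And>p q. \<exists>j. l1norm (idx_vec j - (idx_vec p + idx_vec q)) \<le> a \<and> f j \<ge> \<kappa> * f p * f q"
proof -
  obtain a b c where abc: "a > 0" "b > 0" "c > 0"
    and CG: "\<And>x y :: real^'d. nu_ball f (x + y) a \<ge> c * nu_ball f x b * nu_ball f y b"
    using assms unfolding concave_growth_def by blast
  define K where "K = (nat \<lfloor>2 * a\<rfloor> + 1) ^ CARD('d)"
  have K: "real K \<ge> 1" unfolding K_def by simp
  define \<kappa> where "\<kappa> = min 1 (c / K)"
  have \<kappa>: "\<kappa> > 0" "\<kappa> \<le> 1" "\<kappa> \<le> c / K"
    using abc K unfolding \<kappa>_def by auto
  have "\<exists>j. l1norm (idx_vec j - (idx_vec p + idx_vec q)) \<le> a \<and> f j \<ge> \<kappa> * f p * f q" for p q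
  proof -
    let ?A = "{j. l1norm (idx_vec j - (idx_vec p + idx_vec q)) \<le> a}"
    have "finite ?A" using abc by (intro l1_ball_idx_vec(1)) auto
    moreover have "(\<lambda>k. p k + q k) \<in> ?A" using abc by (simp add: idx_vec_add l1norm_def)
    ultimately obtain j where j: "j \<in> ?A" "sum f ?A \<le> card ?A * f j"
      using exists_ge_average by blast
    have "f p \<le> nu_ball f (idx_vec p) b" "f q \<le> nu_ball f (idx_vec q) b"
      using nu_ball_ge_point abc by auto
    then have "c * f p * f q \<le> c * nu_ball f (idx_vec p) b * nu_ball f (idx_vec q) b"
      using abc nonneg[of p] nonneg[of q] by (simp add: mult_mono)
    also have "\<dots> \<le> sum f ?A"
      using CG[of "idx_vec p" "idx_vec q"] unfolding nu_ball_def by simp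
    also have "\<dots> \<le> card ?A * f j" by (rule j(2))
    also have "\<dots> \<le> K * f j"
    proof -
      have "card ?A \<le> K"
        using l1_ball_idx_vec(2)[of a "idx_vec p + idx_vec q"] abc unfolding K_def by simp
      then show ?thesis using nonneg[of j] by (intro mult_right_mono) auto
    qed
    finally have "(c / K) * f p * f q \<le> f j"
      using K by (simp add: field_simps)
    moreover have "\<kappa> * f p * f q \<le> (c / K) * f p * f q"
      using \<kappa>(3) nonneg by (intro mult_right_mono) auto
    ultimately show ?thesis using j(1) by auto
  qed
  with abc \<kappa> that show ?thesis by blast
qed

context
  fixes a \<kappa> :: real
  assumes a: "a > 0" and \<kappa>: "\<kappa> > 0" "\<kappa> \<le> 1"
    and merge: "\<And>p q. \<exists>j. l1norm (idx_vec j - (idx_vec p + idx_vec q)) \<le> a \<and> f j \<ge> \<kappa> * f p * f q"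
begin

lemma merge_ln:
  assumes "f p > 0" and "f q > 0"
  obtains j where "l1norm (idx_vec j - (idx_vec p + idx_vec q)) \<le> a" and "f j > 0"
    and "ln (f j) \<ge> ln \<kappa> + ln (f p) + ln (f q)"
proof -
  obtain j where j: "l1norm (idx_vec j - (idx_vec p + idx_vec q)) \<le> a" "f j \<ge> \<kappa> * f p * f q"
    using merge by blast
  have pos: "\<kappa> * f p * f q > 0" using \<kappa> assms by simp
  then have "f j > 0" using j(2) by linarith
  moreover have "ln (\<kappa> * f p * f q) \<le> ln (f j)" using ln_mono[OF j(2) pos] .
  moreover have "ln (\<kappa> * f p * f q) = ln \<kappa> + ln (f p) + ln (f q)" using \<kappa> assms by (simp add: ln_mult)
  ultimately show ?thesis using that j(1) by simp
qed

lemma merge_power: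
  assumes "f p > 0" and "k > 0"
  shows "\<exists>j. l1norm (idx_vec j - real k *\<^sub>R idx_vec p) \<le> real k * a \<and> f j > 0
           \<and> ln (f j) \<ge> real k * (ln (f p) + ln \<kappa>)"
  using assms(2)
proof (induction k rule: nat_induct_non_zero)
  case 1
  have "ln \<kappa> \<le> 0" using \<kappa> by simp
  then show ?case using assms(1) a by (intro exI[of _ p]) (simp add: l1norm_def)
next
  case (Suc n)
  obtain j where j: "l1norm (idx_vec j - real n *\<^sub>R idx_vec p) \<le> real n * a" "f j > 0"
      "ln (f j) \<ge> real n * (ln (f p) + ln \<kappa>)"
    using Suc.IH by blast
  obtain j' where j': "l1norm (idx_vec j' - (idx_vec j + idx_vec p)) \<le> a" "f j' > 0"
      "ln (f j') \<ge> ln \<kappa> + ln (f j) + ln (f p)"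
    using merge_ln[OF j(2) assms(1)] by blast
  have "idx_vec j' - real (Suc n) *\<^sub>R idx_vec p
      = (idx_vec j' - (idx_vec j + idx_vec p)) + (idx_vec j - real n *\<^sub>R idx_vec p)"
    by (simp add: algebra_simps)
  then have "l1norm (idx_vec j' - real (Suc n) *\<^sub>R idx_vec p)
      \<le> l1norm (idx_vec j' - (idx_vec j + idx_vec p)) + l1norm (idx_vec j - real n *\<^sub>R idx_vec p)"
    by (simp only: l1norm_triangle)
  moreover have "real (Suc n) * a = a + real n * a" by (simp add: algebra_simps)
  moreover have "real (Suc n) * (ln (f p) + ln \<kappa>) = ln \<kappa> + real n * (ln (f p) + ln \<kappa>) + ln (f p)"
    by (simp add: algebra_simps)
  ultimately show ?case using j j' by (intro exI[of _ j']) linarith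
qed

text \<open>A single heavy index \<open>r\<close> near \<open>T\<^sub>0 x\<close> is merged with itself \<open>\<lfloor>T / T\<^sub>0\<rfloor>\<close> times;
  the cost \<open>\<kappa>\<close> of each merge is negligible once \<open>T\<^sub>0\<close> is large.\<close>

lemma grows_frequently_imp_eventually:
  assumes "grows_frequently x \<alpha>"
  shows "grows_eventually x \<alpha>"
  unfolding grows_eventually_def
proof (intro allI impI)
  fix \<delta> :: real assume "\<delta> > 0"
  define n where "n = l1norm x"
  define \<gamma> where "\<gamma> = \<alpha> - 2 * \<delta> / 3"
  have "\<delta> / 3 > 0" using \<open>\<delta> > 0\<close> by simp
  from assms[unfolded grows_frequently_def, rule_format, OF this, of "3 * a / \<delta> + 3 * \<bar>ln \<kappa>\<bar> / \<delta>"]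
  obtain r T\<^sub>0 where T\<^sub>0: "T\<^sub>0 \<ge> 3 * a / \<delta> + 3 * \<bar>ln \<kappa>\<bar> / \<delta>" "T\<^sub>0 > 0"
    and r: "l1norm (idx_vec r - T\<^sub>0 *\<^sub>R x) \<le> \<delta> / 3 * T\<^sub>0" "f r > 0" "ln (f r) \<ge> T\<^sub>0 * (\<alpha> - \<delta> / 3)"
    by blast
  have "3 * a / \<delta> \<ge> 0" "3 * \<bar>ln \<kappa>\<bar> / \<delta> \<ge> 0" using a \<open>\<delta> > 0\<close> by simp_all
  then have "3 * a / \<delta> \<le> T\<^sub>0" "3 * \<bar>ln \<kappa>\<bar> / \<delta> \<le> T\<^sub>0" using T\<^sub>0(1) by linarith+
  then have a_small: "a \<le> T\<^sub>0 * (\<delta> / 3)" and \<kappa>_small: "\<bar>ln \<kappa>\<bar> \<le> T\<^sub>0 * (\<delta> / 3)"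
    using \<open>\<delta> > 0\<close> by (simp_all add: field_simps)
  have rate: "ln (f r) + ln \<kappa> \<ge> T\<^sub>0 * \<gamma>"
    using r(3) \<kappa>_small unfolding \<gamma>_def by (simp add: algebra_simps)
  show "\<exists>M. \<forall>T\<ge>M. \<exists>r. l1norm (idx_vec r - T *\<^sub>R x) \<le> \<delta> * T \<and> 0 < f r \<and> T * (\<alpha> - \<delta>) \<le> ln (f r)"
  proof (intro exI[of _ "max T\<^sub>0 (3 * T\<^sub>0 * (n + \<bar>\<gamma>\<bar>) / \<delta>)"] allI impI)
    fix T assume "max T\<^sub>0 (3 * T\<^sub>0 * (n + \<bar>\<gamma>\<bar>) / \<delta>) \<le> T"
    then have "T \<ge> T\<^sub>0" and T_large: "T\<^sub>0 * n + T\<^sub>0 * \<bar>\<gamma>\<bar> \<le> T * (\<delta> / 3)"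
      using \<open>\<delta> > 0\<close> by (auto simp: field_simps)
    have "T\<^sub>0 * n \<ge> 0" "T\<^sub>0 * \<bar>\<gamma>\<bar> \<ge> 0" using T\<^sub>0(2) l1norm_nonneg[of x] unfolding n_def by simp_all
    obtain k where "k > 0" and kT: "real k * T\<^sub>0 \<le> T" "T < real k * T\<^sub>0 + T\<^sub>0"
      using nat_multiple_approx[OF T\<^sub>0(2) \<open>T \<ge> T\<^sub>0\<close>] by blast
    obtain j where j: "l1norm (idx_vec j - real k *\<^sub>R idx_vec r) \<le> real k * a" "f j > 0"
      "ln (f j) \<ge> real k * (ln (f r) + ln \<kappa>)"
      using merge_power[OF r(2) \<open>k > 0\<close>] by blast
    have "real k * (T\<^sub>0 * \<gamma>) \<le> real k * (ln (f r) + ln \<kappa>)"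
      using rate by (intro mult_left_mono) auto
    moreover have "(real k * T\<^sub>0) * \<gamma> \<ge> T * \<gamma> - T\<^sub>0 * \<bar>\<gamma>\<bar>"
      using mult_ge_approx_below[OF kT T\<^sub>0(2)] .
    moreover have "T * \<gamma> = T * (\<alpha> - \<delta>) + T * (\<delta> / 3)" unfolding \<gamma>_def by (simp add: algebra_simps)
    ultimately have "ln (f j) \<ge> T * (\<alpha> - \<delta>)"
      using j(3) T_large \<open>T\<^sub>0 * n \<ge> 0\<close> by (simp add: mult.assoc)
    moreover have "l1norm (idx_vec j - T *\<^sub>R x) \<le> \<delta> * T"
    proof -
      have "\<bar>real k * T\<^sub>0 - T\<bar> \<le> T\<^sub>0" using kT by (auto simp: abs_le_iff)
      then have "l1norm (idx_vec j - T *\<^sub>R x) \<le> real k * a + real k * (\<delta> / 3 * T\<^sub>0) + T\<^sub>0 * n"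
        using l1norm_near_multiple_ray[OF j(1) r(1)] unfolding n_def by simp
      moreover have "real k * a \<le> (real k * T\<^sub>0) * (\<delta> / 3)"
        using a_small by (simp add: mult_left_mono mult.assoc)
      moreover have "(real k * T\<^sub>0) * (\<delta> / 3) \<le> T * (\<delta> / 3)"
        using kT(1) \<open>\<delta> > 0\<close> by (intro mult_right_mono) auto
      moreover have "real k * (\<delta> / 3 * T\<^sub>0) = (real k * T\<^sub>0) * (\<delta> / 3)" by simp
      moreover have "\<delta> * T = 3 * (T * (\<delta> / 3))" by simp
      ultimately show ?thesis using T_large \<open>T\<^sub>0 * \<bar>\<gamma>\<bar> \<ge> 0\<close> by linarith
    qed
    ultimately show "\<exists>r. l1norm (idx_vec r - T *\<^sub>R x) \<le> \<delta> * T \<and> 0 < f r \<and> T * (\<alpha> - \<delta>) \<le> ln (f r)"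
      using j(2) by blast
  qed
qed

lemma grows_eventually_add:
  assumes "grows_eventually x \<alpha>" and "grows_eventually y \<beta>"
  shows "grows_eventually (x + y) (\<alpha> + \<beta>)"
  unfolding grows_eventually_def
proof (intro allI impI)
  fix \<delta> :: real assume "\<delta> > 0"
  then have "\<delta> / 3 > 0" by simp
  obtain Mx where
    Mx: "\<And>T. T \<ge> Mx \<Longrightarrow> \<exists>r. l1norm (idx_vec r - T *\<^sub>R x) \<le> \<delta> / 3 * T \<and> f r > 0 \<and> ln (f r) \<ge> T * (\<alpha> - \<delta> / 3)"
    using assms(1)[unfolded grows_eventually_def, rule_format, OF \<open>\<delta> / 3 > 0\<close>] by blast
  obtain My where
    My: "\<And>T. T \<ge> My \<Longrightarrow> \<exists>r. l1norm (idx_vec r - T *\<^sub>R y) \<le> \<delta> / 3 * T \<and> f r > 0 \<and> ln (f r) \<ge> T * (\<beta> - \<delta> / 3)"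
    using assms(2)[unfolded grows_eventually_def, rule_format, OF \<open>\<delta> / 3 > 0\<close>] by blast
  show "\<exists>M. \<forall>T\<ge>M. \<exists>r. l1norm (idx_vec r - T *\<^sub>R (x + y)) \<le> \<delta> * T \<and> 0 < f r \<and> T * (\<alpha> + \<beta> - \<delta>) \<le> ln (f r)"
  proof (intro exI[of _ "max (max Mx My) (3 * (a + \<bar>ln \<kappa>\<bar>) / \<delta>)"] allI impI)
    fix T assume T: "max (max Mx My) (3 * (a + \<bar>ln \<kappa>\<bar>) / \<delta>) \<le> T"
    then obtain rx ry where
      rx: "l1norm (idx_vec rx - T *\<^sub>R x) \<le> \<delta> / 3 * T" "f rx > 0" "ln (f rx) \<ge> T * (\<alpha> - \<delta> / 3)"
      and ry: "l1norm (idx_vec ry - T *\<^sub>R y) \<le> \<delta> / 3 * T" "f ry > 0" "ln (f ry) \<ge> T * (\<beta> - \<delta> / 3)"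
      using Mx[of T] My[of T] by auto
    have small: "a + \<bar>ln \<kappa>\<bar> \<le> T * (\<delta> / 3)"
      using T \<open>\<delta> > 0\<close> by (simp add: field_simps)
    obtain j where j: "l1norm (idx_vec j - (idx_vec rx + idx_vec ry)) \<le> a" "f j > 0"
      "ln (f j) \<ge> ln \<kappa> + ln (f rx) + ln (f ry)"
      using merge_ln[OF rx(2) ry(2)] by blast
    from j(3) have "ln (f j) \<ge> T * (\<alpha> + \<beta> - \<delta>)"
      using rx(3) ry(3) small a by (simp add: algebra_simps)
    moreover have "idx_vec j - T *\<^sub>R (x + y) = (idx_vec j - (idx_vec rx + idx_vec ry))
        + (idx_vec rx - T *\<^sub>R x) + (idx_vec ry - T *\<^sub>R y)"
      by (simp add: algebra_simps)
    then have "l1norm (idx_vec j - T *\<^sub>R (x + y)) \<le> l1norm (idx_vec j - (idx_vec rx + idx_vec ry))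
        + l1norm (idx_vec rx - T *\<^sub>R x) + l1norm (idx_vec ry - T *\<^sub>R y)"
      by (simp only: l1norm_triangle3)
    then have "l1norm (idx_vec j - T *\<^sub>R (x + y)) \<le> \<delta> * T"
      using j(1) rx(1) ry(1) small by (simp add: algebra_simps)
    ultimately show "\<exists>r. l1norm (idx_vec r - T *\<^sub>R (x + y)) \<le> \<delta> * T \<and> 0 < f r \<and> T * (\<alpha> + \<beta> - \<delta>) \<le> ln (f r)"
      using j(2) by blast
  qed
qed

end

lemma psi_superadditive:
  assumes "concave_growth f" and "tau_nu f < \<infinity>"
  shows "psi f x + psi f y \<le> psi f (x + y)"
proof -
  obtain a \<kappa> where a\<kappa>: "a > 0" "\<kappa> > 0" "\<kappa> \<le> 1"
    and merge: "\<And>p q. \<exists>j. l1norm (idx_vec j - (idx_vec p + idx_vec q)) \<le> a \<and> f j \<ge> \<kappa> * f p * f q"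
    using concave_growth_pointwise[OF assms(1)] by blast
  note grows_eventually = grows_frequently_imp_eventually[OF a\<kappa> merge]
    and grows_add = grows_eventually_add[OF a\<kappa> merge]
  obtain B where B: "\<And>x. psi f x \<le> ereal (B * l1norm x)" using psi_le_linear[OF assms(2)] by blast
  have finite: "psi f z \<noteq> \<infinity>" for z
    using B[of z] by auto
  show ?thesis
  proof (cases "x = 0 \<or> y = 0 \<or> psi f x = -\<infinity> \<or> psi f y = -\<infinity>")
    case True
    have "psi f 0 = 0" by (simp add: psi_def)
    with True show ?thesis
      using finite[of x] finite[of y] by (cases "psi f x"; cases "psi f y") auto
  next
    case False
    then obtain px py where px: "psi f x = ereal px" and py: "psi f y = ereal py" and "x \<noteq> 0"
      using finite[of x] finite[of y] by (cases "psi f x"; cases "psi f y") auto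
    have "ereal (px + py) \<le> psi f (x + y)"
    proof (rule ereal_le_epsilonI)
      fix e :: real assume "e > 0"
      then have gx: "grows_frequently x (px - e / 2)" and gy: "grows_frequently y (py - e / 2)"
        using psi_gt_imp_grows_frequently False px py by auto
      then have "grows_frequently (x + y) (px + py - e)"
        using grows_eventually_imp_frequently[OF grows_add[OF grows_eventually[OF gx] grows_eventually[OF gy]]]
        by (simp add: algebra_simps)
      moreover have "x + y \<noteq> 0"
      proof -
        obtain k where "x $ k \<noteq> 0" using \<open>x \<noteq> 0\<close> by (auto simp: vec_eq_iff)
        moreover have "x $ k \<ge> 0" "y $ k \<ge> 0"
          using grows_frequently_nonneg[OF gx] grows_frequently_nonneg[OF gy] by auto
        ultimately have "(x + y) $ k > 0" by simp
        then show ?thesis by (metis less_irrefl zero_index)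
      qed
      ultimately show "ereal (px + py - e) \<le> psi f (x + y)"
        by (rule grows_frequently_imp_psi_ge)
    qed
    then show ?thesis using px py by simp
  qed
qed

end

section \<open>Linear majorants of \<open>\<psi>\<close> and the domain of convergence\<close>

definition linear_majorants :: "(('d::finite \<Rightarrow> nat) \<Rightarrow> real) \<Rightarrow> (real^'d) set" where
  "linear_majorants f = {\<theta>. \<forall>y. psi f y \<le> ereal (- (y \<bullet> \<theta>))}"

lemma closed_linear_majorants:
  fixes f :: "('d::finite \<Rightarrow> nat) \<Rightarrow> real"
  shows "closed (linear_majorants f)"
proof -
  have "closed {\<theta>::real^'d. psi f y \<le> ereal (- (y \<bullet> \<theta>))}" for y :: "real^'d"
  proof (cases "psi f y")
    case (real p)
    then have "{\<theta>. psi f y \<le> ereal (- (y \<bullet> \<theta>))} = {\<theta>. y \<bullet> \<theta> \<le> - p}" by auto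
    then show ?thesis by (simp add: closed_halfspace_le)
  qed auto
  moreover have "linear_majorants f = (\<Inter>y. {\<theta>. psi f y \<le> ereal (- (y \<bullet> \<theta>))})"
    unfolding linear_majorants_def by auto
  ultimately show ?thesis by (simp add: closed_INT)
qed

lemma inner_le_near_unit_ray:
  assumes "v \<in> ray_cone u \<delta>" and "l1norm u = 1" and "\<delta> \<le> 1 / 2"
  shows "v \<bullet> \<theta> \<le> l1norm v * (u \<bullet> \<theta> + 4 * \<delta> * l1norm \<theta>)"
proof -
  obtain t where t: "t > 0" "l1norm (v - t *\<^sub>R u) < \<delta> * t"
    using assms(1) unfolding ray_cone_def by auto
  then have "\<delta> * t > 0" using l1norm_nonneg[of "v - t *\<^sub>R u"] by linarith
  then have "\<delta> \<ge> 0" using t(1) by (simp add: zero_less_mult_iff)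
  define R where "R = l1norm v"
  have "\<bar>R - t\<bar> \<le> \<delta> * t"
    using l1norm_near_ray[OF less_imp_le[OF t(2)]] t(1) assms(2) unfolding R_def by auto
  moreover have "\<delta> * t \<le> 1 / 2 * t" using assms(3) t(1) by (intro mult_right_mono) auto
  ultimately have "t \<le> 2 * R" by (simp add: abs_le_iff)
  have "v \<bullet> \<theta> = t * (u \<bullet> \<theta>) + (v - t *\<^sub>R u) \<bullet> \<theta>" by (simp add: algebra_simps)
  moreover have "(v - t *\<^sub>R u) \<bullet> \<theta> \<le> \<delta> * t * l1norm \<theta>"
  proof -
    have "l1norm (v - t *\<^sub>R u) * l1norm \<theta> \<le> \<delta> * t * l1norm \<theta>"
      using t(2) l1norm_nonneg[of \<theta>] by (intro mult_right_mono) auto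
    then show ?thesis using abs_inner_le_l1norm[of "v - t *\<^sub>R u" \<theta>] by linarith
  qed
  moreover have "t * (u \<bullet> \<theta>) \<le> R * (u \<bullet> \<theta>) + \<delta> * t * l1norm \<theta>"
  proof -
    have "\<bar>u \<bullet> \<theta>\<bar> \<le> l1norm \<theta>" using abs_inner_le_l1norm[of u \<theta>] assms(2) by simp
    then have "\<bar>t - R\<bar> * \<bar>u \<bullet> \<theta>\<bar> \<le> (\<delta> * t) * l1norm \<theta>"
      using \<open>\<bar>R - t\<bar> \<le> \<delta> * t\<close> by (intro mult_mono) auto
    moreover have "t * (u \<bullet> \<theta>) - R * (u \<bullet> \<theta>) \<le> \<bar>t - R\<bar> * \<bar>u \<bullet> \<theta>\<bar>"
      by (metis abs_ge_self abs_mult left_diff_distrib)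
    ultimately show ?thesis by linarith
  qed
  moreover have "2 * (\<delta> * t * l1norm \<theta>) \<le> R * (4 * \<delta> * l1norm \<theta>)"
  proof -
    have "t * (\<delta> * l1norm \<theta>) \<le> (2 * R) * (\<delta> * l1norm \<theta>)"
      using \<open>t \<le> 2 * R\<close> \<open>\<delta> \<ge> 0\<close> l1norm_nonneg[of \<theta>] by (intro mult_right_mono) auto
    then show ?thesis by (simp add: algebra_simps)
  qed
  ultimately have "v \<bullet> \<theta> \<le> R * (u \<bullet> \<theta>) + R * (4 * \<delta> * l1norm \<theta>)" by linarith
  then show ?thesis unfolding R_def by (simp add: distrib_left)
qed

lemma exp_inner_Relog:
  assumes "\<forall>k. z $ k \<noteq> 0"
  shows "exp (idx_vec i \<bullet> Relog z) = (\<Prod>k\<in>UNIV. norm (z $ k) ^ i k)"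
  using assms by (simp add: exp_inner_idx_vec Relog_def)

lemma summable_exp_neg_l1norm:
  assumes "c > 0"
  shows "(\<lambda>i::'d::finite \<Rightarrow> nat. exp (- c * l1norm (idx_vec i))) summable_on UNIV"
proof (rule nonneg_bdd_above_summable_on)
  let ?q = "exp (- c)"
  have q: "?q < 1" "?q \<ge> 0" using assms by auto
  have exp_prod: "exp (- c * l1norm (idx_vec i)) = (\<Prod>k\<in>UNIV. ?q ^ i k)" for i :: "'d \<Rightarrow> nat"
    using exp_inner_idx_vec[of i "- c *\<^sub>R 1"] by (simp add: l1norm_idx_vec)
  show "bdd_above (sum (\<lambda>i::'d \<Rightarrow> nat. exp (- c * l1norm (idx_vec i))) ` {F. F \<subseteq> UNIV \<and> finite F})"
  proof (rule bdd_aboveI2)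
    fix F :: "('d \<Rightarrow> nat) set" assume "F \<in> {F. F \<subseteq> UNIV \<and> finite F}"
    then have "finite F" by simp
    define N where "N = (\<Sum>i\<in>F. \<Sum>k\<in>UNIV. i k)"
    have "i k \<le> N" if "i \<in> F" for i k
    proof -
      have "i k \<le> (\<Sum>k\<in>UNIV. i k)" by (rule member_le_sum) auto
      also have "\<dots> \<le> N" unfolding N_def using \<open>finite F\<close> that by (intro member_le_sum) auto
      finally show ?thesis .
    qed
    then have sub: "F \<subseteq> PiE UNIV (\<lambda>_. {..N})" by (auto simp: PiE_UNIV_domain)
    have "(\<Sum>i\<in>F. exp (- c * l1norm (idx_vec i))) = (\<Sum>i\<in>F. \<Prod>k\<in>UNIV. ?q ^ i k)"
      unfolding exp_prod ..
    also have "\<dots> \<le> (\<Sum>i\<in>PiE (UNIV :: 'd set) (\<lambda>_. {..N}). \<Prod>k\<in>UNIV. ?q ^ i k)"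
    proof -
      have "finite (PiE (UNIV :: 'd set) (\<lambda>_. {..N}))" by (intro finite_PiE) auto
      then show ?thesis
        using sum_mono2[OF _ sub, of "\<lambda>i. \<Prod>k\<in>UNIV. ?q ^ i k"] by (simp add: prod_nonneg)
    qed
    also have "\<dots> = (\<Prod>k\<in>(UNIV::'d set). \<Sum>n\<le>N. ?q ^ n)"
      by (rule prod_sum_PiE[symmetric]) auto
    also have "\<dots> \<le> (\<Prod>k\<in>(UNIV::'d set). 1 / (1 - ?q))"
    proof (rule prod_mono)
      have "(\<Sum>n\<le>N. ?q ^ n) \<le> (\<Sum>n. ?q ^ n)"
        using q by (intro sum_le_suminf summable_geometric) auto
      then show "0 \<le> (\<Sum>n\<le>N. ?q ^ n) \<and> (\<Sum>n\<le>N. ?q ^ n) \<le> 1 / (1 - ?q)"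
        using q by (auto simp: suminf_geometric intro: sum_nonneg)
    qed
    finally show "(\<Sum>i\<in>F. exp (- c * l1norm (idx_vec i))) \<le> (\<Prod>k\<in>(UNIV::'d set). 1 / (1 - ?q))" .
  qed
qed simp

context nonneg_series
begin

lemma psi_le_if_terms_bounded:
  assumes bound: "\<And>i. f i * exp (idx_vec i \<bullet> \<theta>) \<le> M"
  shows "psi f x \<le> ereal (- (x \<bullet> \<theta>))"
proof (rule ccontr)
  assume contra: "\<not> ?thesis"
  then have "x \<noteq> 0" by (auto simp: psi_def)
  have "ereal (- (x \<bullet> \<theta>)) < psi f x" using contra by simp
  then obtain \<alpha> where \<alpha>': "ereal (- (x \<bullet> \<theta>)) < ereal \<alpha>" "ereal \<alpha> < psi f x"
    using ereal_dense2 by blast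
  then have \<alpha>: "- (x \<bullet> \<theta>) < \<alpha>" "ereal \<alpha> < psi f x" by simp_all
  define g where "g = \<alpha> + x \<bullet> \<theta>"
  define \<delta> where "\<delta> = g / (2 * (1 + l1norm \<theta>))"
  have "g > 0" "\<delta> > 0" using \<alpha>(1) l1norm_nonneg[of \<theta>] unfolding g_def \<delta>_def by auto
  have "1 + l1norm \<theta> > 0" using l1norm_nonneg[of \<theta>] by linarith
  then have "2 * (1 + l1norm \<theta>) \<noteq> 0" by simp
  then have "\<delta> * (2 * (1 + l1norm \<theta>)) = g" unfolding \<delta>_def by simp
  moreover have "\<delta> + \<delta> * l1norm \<theta> = \<delta> * (2 * (1 + l1norm \<theta>)) / 2" by (simp add: algebra_simps)
  ultimately have \<delta>_small: "\<delta> + \<delta> * l1norm \<theta> = g / 2" by simp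
  obtain r T where T: "T \<ge> 2 * (\<bar>ln (max M 1)\<bar> + 1) / g" "T > 0"
    and r: "l1norm (idx_vec r - T *\<^sub>R x) \<le> \<delta> * T" "f r > 0" "ln (f r) \<ge> T * (\<alpha> - \<delta>)"
    using psi_gt_imp_grows_frequently[OF \<open>x \<noteq> 0\<close> \<alpha>(2)] \<open>\<delta> > 0\<close>
    unfolding grows_frequently_def by blast
  have "f r * exp (idx_vec r \<bullet> \<theta>) \<le> max M 1" using bound[of r] by simp
  moreover have "0 < f r * exp (idx_vec r \<bullet> \<theta>)" using r(2) by simp
  ultimately have "ln (f r * exp (idx_vec r \<bullet> \<theta>)) \<le> ln (max M 1)" by (rule ln_mono)
  then have "ln (f r) + idx_vec r \<bullet> \<theta> \<le> ln (max M 1)" using r(2) by (simp add: ln_mult)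
  moreover have "idx_vec r \<bullet> \<theta> \<ge> T * (x \<bullet> \<theta>) - \<delta> * T * l1norm \<theta>"
  proof -
    have "idx_vec r \<bullet> \<theta> = T * (x \<bullet> \<theta>) + (idx_vec r - T *\<^sub>R x) \<bullet> \<theta>" by (simp add: algebra_simps)
    moreover have "\<bar>(idx_vec r - T *\<^sub>R x) \<bullet> \<theta>\<bar> \<le> \<delta> * T * l1norm \<theta>"
      using abs_inner_le_l1norm[of "idx_vec r - T *\<^sub>R x" \<theta>] r(1) l1norm_nonneg[of \<theta>]
      by (meson mult_right_mono order_trans)
    ultimately show ?thesis by linarith
  qed
  moreover have "T * (\<alpha> - \<delta>) + (T * (x \<bullet> \<theta>) - \<delta> * T * l1norm \<theta>) = T * g - T * (\<delta> + \<delta> * l1norm \<theta>)"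
    unfolding g_def by (simp add: algebra_simps)
  moreover have "T * g = 2 * (T * (g / 2))" by simp
  moreover have "T * (\<delta> + \<delta> * l1norm \<theta>) = T * (g / 2)" using \<delta>_small by simp
  moreover have "T * (g / 2) \<ge> \<bar>ln (max M 1)\<bar> + 1" using T \<open>g > 0\<close> by (simp add: field_simps)
  ultimately show False using r(3) by linarith
qed

lemma Omega_subset_linear_majorants: "Omega f \<subseteq> linear_majorants f"
proof
  fix \<theta> assume "\<theta> \<in> Omega f"
  then obtain z where z: "\<theta> = Relog z" "z \<in> abs_conv_domain f" "\<forall>k. z $ k \<noteq> 0"
    unfolding Omega_def using interior_subset by blast
  let ?g = "\<lambda>i. f i * (\<Prod>k\<in>UNIV. norm (z $ k) ^ i k)"
  have "?g i \<le> infsum ?g UNIV" for i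
    using finite_sum_le_infsum[of ?g UNIV "{i}"] z(2) nonneg
    unfolding abs_conv_domain_def by (simp add: prod_nonneg)
  then have "f i * exp (idx_vec i \<bullet> \<theta>) \<le> infsum ?g UNIV" for i
    using exp_inner_Relog[OF z(3)] z(1) by simp
  then show "\<theta> \<in> linear_majorants f"
    unfolding linear_majorants_def using psi_le_if_terms_bounded by blast
qed

lemma psi_nonneg_domain:
  assumes "psi f y \<noteq> -\<infinity>"
  shows "y $ k \<ge> 0"
proof (cases "y = 0")
  case False
  obtain \<alpha> where "ereal \<alpha> < psi f y"
  proof (cases "psi f y")
    case (real r) then show ?thesis using that[of "r - 1"] by simp
  next
    case PInf then show ?thesis using that[of 0] by simp
  qed (use assms in simp)
  then show ?thesis
    using grows_frequently_nonneg psi_gt_imp_grows_frequently[OF False] by blast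
qed simp

lemma linear_majorants_downward_closed:
  assumes "\<theta> \<in> linear_majorants f" and "\<And>k. \<theta>' $ k \<le> \<theta> $ k"
  shows "\<theta>' \<in> linear_majorants f"
  unfolding linear_majorants_def
proof (intro CollectI allI)
  fix y
  show "psi f y \<le> ereal (- (y \<bullet> \<theta>'))"
  proof (cases "psi f y = -\<infinity>")
    case False
    then have "y \<bullet> \<theta>' \<le> y \<bullet> \<theta>"
      unfolding inner_vec_def using psi_nonneg_domain assms(2)
      by (intro sum_mono) (simp add: mult_left_mono)
    moreover have "psi f y \<le> ereal (- (y \<bullet> \<theta>))"
      using assms(1) unfolding linear_majorants_def by auto
    ultimately show ?thesis by (simp add: order_trans)
  qed simp
qed

lemma tau_cone_less_imp_bound:
  assumes "tau_cone f C < ereal \<beta>"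
  obtains R\<^sub>1 where "R\<^sub>1 > 0" and "\<And>R i. R \<ge> R\<^sub>1 \<Longrightarrow> i \<in> annulus C R \<Longrightarrow> f i \<le> exp (R * \<beta>)"
proof -
  obtain R\<^sub>1 where R\<^sub>1: "\<And>R. R \<ge> R\<^sub>1 \<Longrightarrow> ereal (1 / R) * elog (sum f (annulus C R)) < ereal \<beta>"
    using Limsup_lessD[OF assms[unfolded tau_cone_annulus]] by (auto simp: eventually_at_top_linorder)
  have "f i \<le> exp (R * \<beta>)" if "R \<ge> max R\<^sub>1 1" "i \<in> annulus C R" for R i
  proof (cases "f i = 0")
    case False
    have S: "f i \<le> sum f (annulus C R)"
      using that(2) finite_annulus by (intro member_le_sum) (auto simp: nonneg)
    with False nonneg[of i] have "sum f (annulus C R) > 0" by linarith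
    then have "ln (sum f (annulus C R)) / R < \<beta>"
      using R\<^sub>1[of R] that(1) by (simp add: elog_pos)
    then have "ln (sum f (annulus C R)) < R * \<beta>"
      using that(1) by (simp add: field_simps)
    then have "exp (ln (sum f (annulus C R))) < exp (R * \<beta>)" by simp
    then show ?thesis using S \<open>sum f (annulus C R) > 0\<close> by simp
  qed simp
  then show ?thesis using that[of "max R\<^sub>1 1"] by auto
qed

end

context nonneg_series
begin

lemma weighted_terms_bound_near_direction:
  assumes "\<theta> \<in> linear_majorants f" and "\<eta> > 0" and "l1norm u = 1"
  obtains W R\<^sub>0 where "open_cone W" and "u \<in> W"
    and "\<And>i. idx_vec i \<in> W \<Longrightarrow> l1norm (idx_vec i) \<ge> R\<^sub>0 \<Longrightarrow>
           f i * exp (idx_vec i \<bullet> \<theta>) \<le> exp (\<eta> * l1norm (idx_vec i))"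
proof -
  have "u \<noteq> 0" using assms(3) by (auto simp: l1norm_def)
  have "psi f u \<le> ereal (- (u \<bullet> \<theta>))"
    using assms(1) unfolding linear_majorants_def by simp
  also have "\<dots> < ereal (- (u \<bullet> \<theta>) + \<eta> / 2)" using assms(2) by simp
  finally obtain C where C: "open_cone C" "u \<in> C"
    and "ereal (l1norm u) * tau_cone f C < ereal (- (u \<bullet> \<theta>) + \<eta> / 2)"
    using psi_lessE[OF \<open>u \<noteq> 0\<close>] by blast
  then have \<tau>C: "tau_cone f C < ereal (- (u \<bullet> \<theta>) + \<eta> / 2)" using assms(3) by simp
  define \<delta> where "\<delta> = min (1 / 2) (\<eta> / (8 * (l1norm \<theta> + 1)))"
  have "\<delta> > 0" using assms(2) l1norm_nonneg[of \<theta>] unfolding \<delta>_def by auto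
  have "\<delta> \<le> 1 / 2" unfolding \<delta>_def by (rule min.cobounded1)
  have "4 * \<delta> * l1norm \<theta> \<le> 4 * (\<eta> / (8 * (l1norm \<theta> + 1))) * l1norm \<theta>"
    unfolding \<delta>_def using l1norm_nonneg[of \<theta>] by (intro mult_right_mono) auto
  also have "\<dots> \<le> \<eta> / 2"
    using assms(2) l1norm_nonneg[of \<theta>] by (simp add: field_simps)
  finally have \<delta>_small: "4 * \<delta> * l1norm \<theta> \<le> \<eta> / 2" .
  define W where "W = C \<inter> ray_cone u \<delta>"
  have "tau_cone f W \<le> tau_cone f C" unfolding W_def by (intro tau_cone_mono nonneg) auto
  then have "tau_cone f W < ereal (- (u \<bullet> \<theta>) + \<eta> / 2)" using \<tau>C by (rule le_less_trans)
  then obtain R\<^sub>0 where R\<^sub>0: "\<And>R i. R \<ge> R\<^sub>0 \<Longrightarrow> i \<in> annulus W R \<Longrightarrow> f i \<le> exp (R * (- (u \<bullet> \<theta>) + \<eta> / 2))"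
    using tau_cone_less_imp_bound by blast
  have "f i * exp (idx_vec i \<bullet> \<theta>) \<le> exp (\<eta> * l1norm (idx_vec i))"
    if "idx_vec i \<in> W" and "l1norm (idx_vec i) \<ge> R\<^sub>0" for i
  proof -
    define R where "R = l1norm (idx_vec i)"
    have "f i \<le> exp (R * (- (u \<bullet> \<theta>) + \<eta> / 2))"
      using R\<^sub>0 that unfolding annulus_def R_def by auto
    moreover have "idx_vec i \<bullet> \<theta> \<le> R * (u \<bullet> \<theta> + \<eta> / 2)"
    proof -
      have "idx_vec i \<in> ray_cone u \<delta>" using that(1) unfolding W_def by simp
      then have "idx_vec i \<bullet> \<theta> \<le> R * (u \<bullet> \<theta> + 4 * \<delta> * l1norm \<theta>)"
        using inner_le_near_unit_ray assms(3) \<open>\<delta> \<le> 1 / 2\<close> unfolding R_def by blast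
      also have "\<dots> \<le> R * (u \<bullet> \<theta> + \<eta> / 2)"
        using \<delta>_small l1norm_nonneg[of "idx_vec i"] unfolding R_def by (intro mult_left_mono) auto
      finally show ?thesis .
    qed
    ultimately have "f i * exp (idx_vec i \<bullet> \<theta>) \<le> exp (R * (- (u \<bullet> \<theta>) + \<eta> / 2)) * exp (R * (u \<bullet> \<theta> + \<eta> / 2))"
      using nonneg[of i] by (intro mult_mono) auto
    also have "\<dots> = exp (\<eta> * R)" by (simp flip: exp_add add: algebra_simps)
    finally show ?thesis unfolding R_def .
  qed
  moreover have "open_cone W" unfolding W_def using C(1) by (intro open_cone_Int open_cone_ray_cone)
  moreover have "u \<in> W" unfolding W_def using C(2) ray_cone_self[OF \<open>\<delta> > 0\<close>] by simp
  ultimately show ?thesis using that by blast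
qed

text \<open>By compactness of the unit sphere, finitely many of the cones above cover all directions.\<close>

lemma weighted_terms_bound_eventually:
  assumes "\<theta> \<in> linear_majorants f" and "\<eta> > 0"
  obtains R where "\<And>i. l1norm (idx_vec i) > R \<Longrightarrow> f i * exp (idx_vec i \<bullet> \<theta>) \<le> exp (\<eta> * l1norm (idx_vec i))"
proof -
  let ?S = "{u :: real^'d. l1norm u = 1}"
  let ?P = "\<lambda>u W R\<^sub>0. open_cone W \<and> u \<in> W \<and> (\<forall>i. idx_vec i \<in> W \<longrightarrow> l1norm (idx_vec i) \<ge> R\<^sub>0 \<longrightarrow>
     f i * exp (idx_vec i \<bullet> \<theta>) \<le> exp (\<eta> * l1norm (idx_vec i)))"
  have "\<exists>p. ?P u (fst p) (snd p)" if u: "u \<in> ?S" for u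
  proof -
    have "l1norm u = 1" using u by simp
    obtain W R\<^sub>0 where "open_cone W" "u \<in> W" "\<And>i. idx_vec i \<in> W \<Longrightarrow> l1norm (idx_vec i) \<ge> R\<^sub>0 \<Longrightarrow>
        f i * exp (idx_vec i \<bullet> \<theta>) \<le> exp (\<eta> * l1norm (idx_vec i))"
      using weighted_terms_bound_near_direction[OF assms \<open>l1norm u = 1\<close>] by blast
    then show ?thesis by (intro exI[of _ "(W, R\<^sub>0)"]) simp
  qed
  then obtain p where p: "\<And>u. u \<in> ?S \<Longrightarrow> ?P u (fst (p u)) (snd (p u))" by metis
  define W where "W u = fst (p u)" for u
  define R\<^sub>0 where "R\<^sub>0 u = snd (p u)" for u
  have WR: "\<And>u. u \<in> ?S \<Longrightarrow> ?P u (W u) (R\<^sub>0 u)" using p unfolding W_def R\<^sub>0_def by blast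
  have "compact ?S"
  proof (rule compact_eq_bounded_closed[THEN iffD2], intro conjI)
    have "norm u \<le> 1" if "u \<in> ?S" for u using norm_le_l1norm[of u] that by simp
    then show "bounded ?S" unfolding bounded_iff by blast
    show "closed ?S" by (intro closed_Collect_eq continuous_intros)
  qed
  moreover have "open (W u)" if "u \<in> ?S" for u using WR[OF that] unfolding open_cone_def by auto
  moreover have "?S \<subseteq> (\<Union>u\<in>?S. W u)" using WR by blast
  ultimately obtain U where U: "U \<subseteq> ?S" "finite U" "?S \<subseteq> (\<Union>u\<in>U. W u)"
    by (rule compactE_image)
  define R where "R = Max (insert 0 (R\<^sub>0 ` U))"
  have R: "R \<ge> 0" "\<And>u. u \<in> U \<Longrightarrow> R\<^sub>0 u \<le> R" unfolding R_def using U(2) by auto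
  have "f i * exp (idx_vec i \<bullet> \<theta>) \<le> exp (\<eta> * l1norm (idx_vec i))" if "l1norm (idx_vec i) > R" for i
  proof -
    define n where "n = l1norm (idx_vec i)"
    have n: "n > R" "n > 0" using that R(1) unfolding n_def by auto
    then have "(1 / n) *\<^sub>R idx_vec i \<in> ?S" unfolding n_def by (simp add: l1norm_scaleR)
    then obtain u where u: "u \<in> U" "(1 / n) *\<^sub>R idx_vec i \<in> W u" using U(3) by blast
    then have "idx_vec i \<in> W u"
      using WR[of u] U(1) open_cone_scaleR_iff[of "W u" "1 / n"] n(2) by auto
    then show ?thesis
      using WR[of u] U(1) u(1) R(2)[OF u(1)] n unfolding n_def by auto
  qed
  then show ?thesis using that by blast
qed

lemma weighted_terms_subexponential:
  assumes "\<theta> \<in> linear_majorants f" and "\<eta> > 0"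
  obtains A where "\<And>i. f i * exp (idx_vec i \<bullet> \<theta>) \<le> A * exp (\<eta> * l1norm (idx_vec i))"
proof -
  obtain R where R: "\<And>i. l1norm (idx_vec i) > R \<Longrightarrow> f i * exp (idx_vec i \<bullet> \<theta>) \<le> exp (\<eta> * l1norm (idx_vec i))"
    using weighted_terms_bound_eventually[OF assms] by blast
  define B where "B = {i. l1norm (idx_vec i - (0 :: real^'d)) \<le> max R 0}"
  have "finite B" unfolding B_def by (rule l1_ball_idx_vec(1)) simp
  define A where "A = (\<Sum>i\<in>B. f i * exp (idx_vec i \<bullet> \<theta>)) + 1"
  have "A \<ge> 1" unfolding A_def by (simp add: sum_nonneg nonneg)
  have "f i * exp (idx_vec i \<bullet> \<theta>) \<le> A * exp (\<eta> * l1norm (idx_vec i))" for i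
  proof (cases "i \<in> B")
    case True
    then have "f i * exp (idx_vec i \<bullet> \<theta>) \<le> (\<Sum>i\<in>B. f i * exp (idx_vec i \<bullet> \<theta>))"
      using \<open>finite B\<close> by (intro member_le_sum) (simp_all add: nonneg)
    then have "f i * exp (idx_vec i \<bullet> \<theta>) \<le> A * 1" unfolding A_def by simp
    also have "\<dots> \<le> A * exp (\<eta> * l1norm (idx_vec i))"
      using \<open>A \<ge> 1\<close> assms(2) l1norm_nonneg[of "idx_vec i"] by (intro mult_left_mono) auto
    finally show ?thesis .
  next
    case False
    then have "f i * exp (idx_vec i \<bullet> \<theta>) \<le> exp (\<eta> * l1norm (idx_vec i))"
      using R unfolding B_def by auto
    also have "\<dots> \<le> A * exp (\<eta> * l1norm (idx_vec i))"
      using \<open>A \<ge> 1\<close> by simp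
    finally show ?thesis .
  qed
  then show ?thesis using that by blast
qed

lemma summable_shifted_weighted_terms:
  assumes "\<theta> \<in> linear_majorants f" and "\<eta> > 0"
  shows "(\<lambda>i. f i * exp (idx_vec i \<bullet> (\<theta> - \<eta> *\<^sub>R 1))) summable_on UNIV"
proof -
  obtain A where A: "\<And>i. f i * exp (idx_vec i \<bullet> \<theta>) \<le> A * exp (\<eta> / 2 * l1norm (idx_vec i))"
    using weighted_terms_subexponential[OF assms(1), of "\<eta> / 2"] assms(2) by auto
  have "(\<lambda>i. A * exp (- (\<eta> / 2) * l1norm (idx_vec i))) summable_on UNIV"
    using summable_exp_neg_l1norm[of "\<eta> / 2"] assms(2) by (intro summable_on_cmult_right) auto
  then show ?thesis
  proof (rule summable_on_comparison_test)
    fix i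
    have "f i * exp (idx_vec i \<bullet> (\<theta> - \<eta> *\<^sub>R 1))
        = f i * exp (idx_vec i \<bullet> \<theta>) * exp (- \<eta> * l1norm (idx_vec i))"
      by (simp add: inner_diff_right l1norm_idx_vec exp_diff exp_minus field_simps)
    also have "\<dots> \<le> A * exp (\<eta> / 2 * l1norm (idx_vec i)) * exp (- \<eta> * l1norm (idx_vec i))"
      using A[of i] by (intro mult_right_mono) auto
    also have "\<dots> = A * exp (- (\<eta> / 2) * l1norm (idx_vec i))"
      by (simp add: mult.assoc flip: exp_add)
    finally show "f i * exp (idx_vec i \<bullet> (\<theta> - \<eta> *\<^sub>R 1)) \<le> A * exp (- (\<eta> / 2) * l1norm (idx_vec i))" .
    show "0 \<le> f i * exp (idx_vec i \<bullet> (\<theta> - \<eta> *\<^sub>R 1))" using nonneg[of i] by simp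
  qed
qed

text \<open>A point \<open>w\<close> near \<open>z\<close> has \<open>|w\<^sub>k| \<le> e\<^bsup>\<theta>\<^sub>k - \<epsilon>/2\<^esup>\<close>, so its series is dominated by the
  summable shifted weights at \<open>\<theta> - (\<epsilon>/2) 1\<close>.\<close>

lemma shift_in_Omega:
  assumes "\<theta> \<in> linear_majorants f" and "\<epsilon> > 0"
  shows "\<theta> - \<epsilon> *\<^sub>R 1 \<in> Omega f"
proof -
  define z :: "complex^'d" where "z = (\<chi> k. complex_of_real (exp (\<theta> $ k - \<epsilon>)))"
  have z0: "\<forall>k. z $ k \<noteq> 0" unfolding z_def by simp
  have Relog_z: "Relog z = \<theta> - \<epsilon> *\<^sub>R 1" unfolding Relog_def z_def by (simp add: vec_eq_iff)
  define e where "e = Min (range (\<lambda>k. exp (\<theta> $ k - \<epsilon> / 2) - exp (\<theta> $ k - \<epsilon>)))"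
  have "e > 0" unfolding e_def using assms(2) by (subst Min_gr_iff) auto
  have "w \<in> abs_conv_domain f" if "dist w z < e" for w
  proof -
    have "norm (w $ k) \<le> exp ((\<theta> - (\<epsilon> / 2) *\<^sub>R 1) $ k)" for k
    proof -
      have "norm (w $ k) \<le> norm (z $ k) + norm ((w - z) $ k)"
        using norm_triangle_ineq[of "z $ k" "(w - z) $ k"] by simp
      moreover have "norm ((w - z) $ k) \<le> dist w z"
        using Finite_Cartesian_Product.norm_nth_le[of "w - z" k] by (simp add: dist_norm)
      moreover have "e \<le> exp (\<theta> $ k - \<epsilon> / 2) - exp (\<theta> $ k - \<epsilon>)"
        unfolding e_def by (rule Min_le) auto
      moreover have "norm (z $ k) = exp (\<theta> $ k - \<epsilon>)" unfolding z_def by simp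
      ultimately show ?thesis using that by simp
    qed
    then have "f i * (\<Prod>k\<in>UNIV. norm (w $ k) ^ i k) \<le> f i * exp (idx_vec i \<bullet> (\<theta> - (\<epsilon> / 2) *\<^sub>R 1))" for i
      unfolding exp_inner_idx_vec using nonneg[of i]
      by (intro mult_left_mono prod_mono power_mono conjI) auto
    then have "(\<lambda>i. f i * (\<Prod>k\<in>UNIV. norm (w $ k) ^ i k)) summable_on UNIV"
      using summable_on_comparison_test[OF summable_shifted_weighted_terms[OF assms(1), of "\<epsilon> / 2"]]
        assms(2) nonneg by (simp add: prod_nonneg)
    then show ?thesis unfolding abs_conv_domain_def by simp
  qed
  then have "z \<in> interior (abs_conv_domain f)"
    using \<open>e > 0\<close> by (auto simp: mem_interior dist_commute)
  then show ?thesis unfolding Omega_def using z0 Relog_z[symmetric] by blast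
qed

lemma closure_Omega: "closure (Omega f) = linear_majorants f"
proof
  show "closure (Omega f) \<subseteq> linear_majorants f"
    by (intro closure_minimal Omega_subset_linear_majorants closed_linear_majorants)
  show "linear_majorants f \<subseteq> closure (Omega f)"
  proof
    fix \<theta> assume \<theta>: "\<theta> \<in> linear_majorants f"
    have "((\<lambda>\<epsilon>. \<theta> - \<epsilon> *\<^sub>R 1) \<longlongrightarrow> \<theta> - 0 *\<^sub>R 1) (at_right 0)"
      by (intro tendsto_intros)
    moreover have "\<forall>\<^sub>F \<epsilon> in at_right 0. \<theta> - \<epsilon> *\<^sub>R 1 \<in> closure (Omega f)"
      using eventually_at_right_less[of 0]
    proof (rule eventually_mono)
      fix \<epsilon> :: real assume "\<epsilon> > 0"
      then show "\<theta> - \<epsilon> *\<^sub>R 1 \<in> closure (Omega f)"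
        using shift_in_Omega[OF \<theta>] closure_subset by blast
    qed
    ultimately show "\<theta> \<in> closure (Omega f)"
      by (intro Lim_in_closed_set[of _ "\<lambda>\<epsilon>. \<theta> - \<epsilon> *\<^sub>R 1" "at_right 0"]) auto
  qed
qed

end

section \<open>Concavity of \<open>\<psi>\<close> and the support function\<close>

lemma separating_cone:
  fixes C :: "'a::real_inner set"
  assumes "0 \<in> C" and cone: "\<And>p t. p \<in> C \<Longrightarrow> t > 0 \<Longrightarrow> t *\<^sub>R p \<in> C"
    and sep: "\<forall>p\<in>C. b < inner a p"
  shows "b < 0" and "\<And>p. p \<in> C \<Longrightarrow> inner a p \<ge> 0"
proof -
  show "b < 0" using sep assms(1) by force
  fix p assume "p \<in> C"
  show "inner a p \<ge> 0"
  proof (rule ccontr)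
    assume "\<not> inner a p \<ge> 0"
    then have "b / inner a p > 0" using \<open>b < 0\<close> by (simp add: divide_neg_neg)
    then have "b < inner a ((b / inner a p) *\<^sub>R p)" using sep cone \<open>p \<in> C\<close> by blast
    then show False using \<open>\<not> inner a p \<ge> 0\<close> by simp
  qed
qed

lemma scaleR_mem_psi_hypograph:
  assumes "p \<in> psi_hypograph f" and "t > 0"
  shows "t *\<^sub>R p \<in> psi_hypograph f"
proof -
  obtain y s where p: "p = (y, s)" "ereal s \<le> psi f y"
    using assms(1) unfolding psi_hypograph_def by auto
  then have "ereal t * ereal s \<le> ereal t * psi f y"
    using assms(2) by (intro ereal_mult_left_mono) auto
  then show ?thesis
    using p psi_scaleR[OF assms(2), of f y] unfolding psi_hypograph_def by simp
qed

locale cg_series = nonneg_series f for f :: "('d::finite \<Rightarrow> nat) \<Rightarrow> real" +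
  assumes concave_growth: "concave_growth f"
    and tau_finite: "tau_nu f < \<infinity>"
begin

lemma convex_psi_hypograph: "convex (psi_hypograph f)"
  unfolding convex_def
proof (intro ballI allI impI)
  fix p q :: "(real^'d) \<times> real" and u v :: real
  assume p: "p \<in> psi_hypograph f" and q: "q \<in> psi_hypograph f" and "u \<ge> 0" "v \<ge> 0" "u + v = 1"
  show "u *\<^sub>R p + v *\<^sub>R q \<in> psi_hypograph f"
  proof (cases "u = 0 \<or> v = 0")
    case True
    then show ?thesis using \<open>u + v = 1\<close> p q by auto
  next
    case False
    then have "u *\<^sub>R p \<in> psi_hypograph f" "v *\<^sub>R q \<in> psi_hypograph f"
      using \<open>u \<ge> 0\<close> \<open>v \<ge> 0\<close> p q by (simp_all add: scaleR_mem_psi_hypograph)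
    moreover obtain y\<^sub>1 s\<^sub>1 y\<^sub>2 s\<^sub>2 where yp: "u *\<^sub>R p = (y\<^sub>1, s\<^sub>1)" "v *\<^sub>R q = (y\<^sub>2, s\<^sub>2)" by fastforce
    ultimately have "ereal s\<^sub>1 \<le> psi f y\<^sub>1" "ereal s\<^sub>2 \<le> psi f y\<^sub>2"
      unfolding psi_hypograph_def by auto
    then have "ereal s\<^sub>1 + ereal s\<^sub>2 \<le> psi f y\<^sub>1 + psi f y\<^sub>2" by (rule add_mono)
    also have "\<dots> \<le> psi f (y\<^sub>1 + y\<^sub>2)" by (rule psi_superadditive[OF concave_growth tau_finite])
    finally show ?thesis using yp unfolding psi_hypograph_def by simp
  qed
qed

lemma psi_hypograph_separation:
  assumes "psi f x < ereal (- M)"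
  shows "(\<exists>\<theta>\<in>linear_majorants f. M < x \<bullet> \<theta>)
       \<or> (\<exists>a. a \<bullet> x < 0 \<and> (\<forall>y. psi f y \<noteq> -\<infinity> \<longrightarrow> a \<bullet> y \<ge> 0))"
proof -
  obtain B where B: "\<And>y. psi f y \<le> ereal (B * l1norm y)" using psi_le_linear[OF tau_finite] by blast
  have finite: "psi f y \<noteq> \<infinity>" for y using B[of y] by auto
  have "(x, - M) \<notin> psi_hypograph f" using assms unfolding psi_hypograph_def by auto
  then obtain a b where ab: "inner a (x, - M) < b" "\<forall>p\<in>psi_hypograph f. b < inner a p"
    using separating_hyperplane_closed_point[OF convex_psi_hypograph closed_psi_hypograph[OF tau_finite]]
    by blast
  have "0 \<in> psi_hypograph f" "(0, -1) \<in> psi_hypograph f"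
    unfolding psi_hypograph_def by (simp_all add: psi_def zero_prod_def)
  note separation = separating_cone[OF \<open>0 \<in> psi_hypograph f\<close> scaleR_mem_psi_hypograph ab(2)]
  have "b < 0" by (rule separation(1))
  have nonneg_on: "\<And>p. p \<in> psi_hypograph f \<Longrightarrow> inner a p \<ge> 0" by (rule separation(2))
  obtain a\<^sub>1 \<beta> where a: "a = (a\<^sub>1, \<beta>)" by fastforce
  have "\<beta> \<le> 0" using nonneg_on[OF \<open>(0, -1) \<in> psi_hypograph f\<close>] a by simp
  have "a\<^sub>1 \<bullet> x - \<beta> * M < 0" using ab(1) \<open>b < 0\<close> a by simp
  have majorant: "a\<^sub>1 \<bullet> y + \<beta> * s \<ge> 0" if "ereal s \<le> psi f y" for y s
    using nonneg_on[of "(y, s)"] that a unfolding psi_hypograph_def by simp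
  show ?thesis
  proof (cases "\<beta> < 0")
    case True
    have "(1 / \<beta>) *\<^sub>R a\<^sub>1 \<in> linear_majorants f"
      unfolding linear_majorants_def
    proof (intro CollectI allI)
      fix y
      show "psi f y \<le> ereal (- (y \<bullet> (1 / \<beta>) *\<^sub>R a\<^sub>1))"
      proof (cases "psi f y")
        case (real s)
        then have "a\<^sub>1 \<bullet> y + \<beta> * s \<ge> 0" using majorant by simp
        then show ?thesis using real True by (simp add: field_simps inner_commute)
      qed (use finite in auto)
    qed
    moreover have "M < x \<bullet> (1 / \<beta>) *\<^sub>R a\<^sub>1"
      using \<open>a\<^sub>1 \<bullet> x - \<beta> * M < 0\<close> True by (simp add: field_simps inner_commute)
    ultimately show ?thesis by blast
  next
    case False
    then have "\<beta> = 0" using \<open>\<beta> \<le> 0\<close> by simp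
    have "a\<^sub>1 \<bullet> y \<ge> 0" if "psi f y \<noteq> -\<infinity>" for y
      using majorant[of _ y] that finite[of y] \<open>\<beta> = 0\<close> by (cases "psi f y") auto
    then show ?thesis using \<open>a\<^sub>1 \<bullet> x - \<beta> * M < 0\<close> \<open>\<beta> = 0\<close> by auto
  qed
qed

lemma linear_majorants_nonempty: "linear_majorants f \<noteq> {}"
proof -
  have "psi f 0 < ereal (- (- 1))" by (simp add: psi_def)
  then show ?thesis using psi_hypograph_separation[of 0 "- 1"] by auto
qed

text \<open>In the degenerate case of a vertical separating hyperplane \<open>a\<close>, moving a majorant
  far in direction \<open>-a\<close> keeps it a majorant and makes \<open>x \<bullet> \<theta>\<close> as large as needed.\<close>

lemma exists_linear_majorant_above:
  assumes "psi f x < ereal (- M)"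
  obtains \<theta> where "\<theta> \<in> linear_majorants f" and "M < x \<bullet> \<theta>"
proof -
  consider (majorant) "\<exists>\<theta>\<in>linear_majorants f. M < x \<bullet> \<theta>"
    | (vertical) a where "a \<bullet> x < 0" "\<And>y. psi f y \<noteq> -\<infinity> \<Longrightarrow> a \<bullet> y \<ge> 0"
    using psi_hypograph_separation[OF assms] by blast
  then show ?thesis
  proof cases
    case majorant
    then show ?thesis using that by blast
  next
    case vertical
    obtain \<theta>\<^sub>0 where \<theta>\<^sub>0: "\<theta>\<^sub>0 \<in> linear_majorants f" using linear_majorants_nonempty by blast
    define t where "t = (\<bar>M\<bar> + \<bar>x \<bullet> \<theta>\<^sub>0\<bar> + 1) / (- (a \<bullet> x))"
    have "\<bar>M\<bar> + \<bar>x \<bullet> \<theta>\<^sub>0\<bar> + 1 > 0" by (simp add: add_nonneg_pos)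
    then have "t > 0" unfolding t_def using vertical(1) by (intro divide_pos_pos) auto
    have "\<theta>\<^sub>0 - t *\<^sub>R a \<in> linear_majorants f"
      unfolding linear_majorants_def
    proof (intro CollectI allI)
      fix y
      show "psi f y \<le> ereal (- (y \<bullet> (\<theta>\<^sub>0 - t *\<^sub>R a)))"
      proof (cases "psi f y = -\<infinity>")
        case False
        then have "t * (a \<bullet> y) \<ge> 0" using vertical(2) \<open>t > 0\<close> by simp
        then have "- (y \<bullet> \<theta>\<^sub>0) \<le> - (y \<bullet> (\<theta>\<^sub>0 - t *\<^sub>R a))" by (simp add: inner_diff_right inner_commute)
        moreover have "psi f y \<le> ereal (- (y \<bullet> \<theta>\<^sub>0))"
          using \<theta>\<^sub>0 unfolding linear_majorants_def by auto
        ultimately show ?thesis by (simp add: order_trans)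
      qed simp
    qed
    moreover have "t * (a \<bullet> x) = - (\<bar>M\<bar> + \<bar>x \<bullet> \<theta>\<^sub>0\<bar> + 1)" unfolding t_def using vertical(1) by simp
    then have "M < x \<bullet> (\<theta>\<^sub>0 - t *\<^sub>R a)" by (simp add: inner_diff_right inner_commute)
    ultimately show ?thesis using that by blast
  qed
qed

lemma neg_psi_eq_SUP_linear_majorants: "- psi f x = (SUP \<theta>\<in>linear_majorants f. ereal (x \<bullet> \<theta>))"
proof (rule antisym)
  show "- psi f x \<le> (SUP \<theta>\<in>linear_majorants f. ereal (x \<bullet> \<theta>))"
  proof (rule ccontr)
    assume "\<not> ?thesis"
    then have "(SUP \<theta>\<in>linear_majorants f. ereal (x \<bullet> \<theta>)) < - psi f x" by simp
    then obtain M where M: "(SUP \<theta>\<in>linear_majorants f. ereal (x \<bullet> \<theta>)) < ereal M" "ereal M < - psi f x"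
      using ereal_dense2 by blast
    then have "psi f x < ereal (- M)" by (cases "psi f x") auto
    then obtain \<theta> where \<theta>: "\<theta> \<in> linear_majorants f" "M < x \<bullet> \<theta>" by (rule exists_linear_majorant_above)
    then have "ereal (x \<bullet> \<theta>) \<le> (SUP \<theta>\<in>linear_majorants f. ereal (x \<bullet> \<theta>))" by (intro SUP_upper)
    then have "ereal (x \<bullet> \<theta>) < ereal M" using M(1) by (rule le_less_trans)
    then show False using \<theta>(2) by simp
  qed
  show "(SUP \<theta>\<in>linear_majorants f. ereal (x \<bullet> \<theta>)) \<le> - psi f x"
  proof (rule SUP_least)
    fix \<theta> assume "\<theta> \<in> linear_majorants f"
    then have "psi f x \<le> ereal (- (x \<bullet> \<theta>))" unfolding linear_majorants_def by auto
    then show "ereal (x \<bullet> \<theta>) \<le> - psi f x" by (cases "psi f x") auto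
  qed
qed

end

section \<open>The boundary of \<open>\<Omega>\<close>\<close>

context nonneg_series
begin

lemma linear_majorants_ne_UNIV:
  assumes "Omega f \<noteq> UNIV"
  shows "linear_majorants f \<noteq> UNIV"
proof
  assume "linear_majorants f = UNIV"
  then have "(\<omega> + 1) - 1 *\<^sub>R 1 \<in> Omega f" for \<omega> by (intro shift_in_Omega) auto
  then show False using assms by auto
qed

text \<open>Since \<open>linear_majorants f\<close> is downward closed, pushing \<open>\<theta>\<close> up along the diagonal
  stays inside it until the frontier is hit, and for \<open>x \<ge> 0\<close> this only increases \<open>x \<bullet> \<theta>\<close>.\<close>

lemma exists_frontier_majorant_above:
  assumes "linear_majorants f \<noteq> UNIV" and "\<theta> \<in> linear_majorants f" and "\<And>k. x $ k \<ge> 0"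
  obtains \<theta>' where "\<theta>' \<in> frontier (linear_majorants f)" and "x \<bullet> \<theta> \<le> x \<bullet> \<theta>'"
proof -
  let ?K = "linear_majorants f"
  obtain \<omega> where "\<omega> \<notin> ?K" using assms(1) by blast
  define T where "T = {t. 0 \<le> t \<and> \<theta> + t *\<^sub>R 1 \<in> ?K}"
  have "t \<le> l1norm (\<omega> - \<theta>)" if "t \<in> T" for t
  proof (rule ccontr)
    assume "\<not> t \<le> l1norm (\<omega> - \<theta>)"
    then have "\<omega> $ k \<le> (\<theta> + t *\<^sub>R 1) $ k" for k
      using abs_nth_le_l1norm[of "\<omega> - \<theta>" k] by simp
    then show False
      using linear_majorants_downward_closed \<open>\<omega> \<notin> ?K\<close> that unfolding T_def by blast
  qed
  then have "bdd_above T" by (auto simp: bdd_above_def)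
  have "0 \<in> T" unfolding T_def using assms(2) by simp
  have "T = {0..} \<inter> (\<lambda>t. \<theta> + t *\<^sub>R 1) -` ?K" unfolding T_def by auto
  then have "closed T"
    by (auto intro!: closed_Int continuous_closed_vimage closed_linear_majorants continuous_intros)
  define t where "t = Sup T"
  have "t \<in> T" unfolding t_def using closed_contains_Sup \<open>0 \<in> T\<close> \<open>bdd_above T\<close> \<open>closed T\<close> by blast
  then have "\<theta> + t *\<^sub>R 1 \<in> ?K" "t \<ge> 0" unfolding T_def by auto
  have "\<theta> + t *\<^sub>R 1 \<notin> interior ?K"
  proof
    assume "\<theta> + t *\<^sub>R 1 \<in> interior ?K"
    moreover have "((\<lambda>s. \<theta> + (t + s) *\<^sub>R 1) \<longlongrightarrow> \<theta> + (t + 0) *\<^sub>R 1) (at_right 0)"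
      by (intro tendsto_intros)
    ultimately have "\<forall>\<^sub>F s in at_right 0. \<theta> + (t + s) *\<^sub>R 1 \<in> interior ?K"
      by (intro topological_tendstoD) auto
    moreover have "\<forall>\<^sub>F s in at_right (0::real). s > 0" by (rule eventually_at_right_less)
    ultimately have "\<forall>\<^sub>F s in at_right 0. \<theta> + (t + s) *\<^sub>R 1 \<in> interior ?K \<and> s > 0"
      by (rule eventually_conj)
    then obtain s where "s > 0" "\<theta> + (t + s) *\<^sub>R 1 \<in> interior ?K"
      using eventually_happens'[of "at_right (0::real)"] by auto
    then have "t + s \<in> T" unfolding T_def using \<open>t \<ge> 0\<close> interior_subset by auto
    then have "t + s \<le> t" unfolding t_def using \<open>bdd_above T\<close> by (rule cSup_upper)
    then show False using \<open>s > 0\<close> by simp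
  qed
  then have "\<theta> + t *\<^sub>R 1 \<in> frontier ?K"
    using \<open>\<theta> + t *\<^sub>R 1 \<in> ?K\<close> closure_closed[OF closed_linear_majorants[of f]] by (simp add: frontier_def)
  moreover have "x \<bullet> \<theta> \<le> x \<bullet> (\<theta> + t *\<^sub>R 1)"
    unfolding inner_vec_def using assms(3) \<open>t \<ge> 0\<close>
    by (intro sum_mono) (simp add: distrib_left)
  ultimately show ?thesis using that by blast
qed

lemma SUP_frontier_linear_majorants:
  assumes "linear_majorants f \<noteq> UNIV" and "\<And>k. x $ k \<ge> 0"
  shows "(SUP \<theta>\<in>frontier (linear_majorants f). ereal (x \<bullet> \<theta>)) = (SUP \<theta>\<in>linear_majorants f. ereal (x \<bullet> \<theta>))"
proof (rule antisym)
  show "(SUP \<theta>\<in>frontier (linear_majorants f). ereal (x \<bullet> \<theta>)) \<le> (SUP \<theta>\<in>linear_majorants f. ereal (x \<bullet> \<theta>))"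
    using frontier_subset_closed[OF closed_linear_majorants] by (rule SUP_subset_mono) simp
  show "(SUP \<theta>\<in>linear_majorants f. ereal (x \<bullet> \<theta>)) \<le> (SUP \<theta>\<in>frontier (linear_majorants f). ereal (x \<bullet> \<theta>))"
  proof (rule SUP_mono)
    fix \<theta> assume "\<theta> \<in> linear_majorants f"
    then obtain \<theta>' where "\<theta>' \<in> frontier (linear_majorants f)" "x \<bullet> \<theta> \<le> x \<bullet> \<theta>'"
      using exists_frontier_majorant_above[OF assms(1) _ assms(2)] by blast
    then show "\<exists>\<theta>'\<in>frontier (linear_majorants f). ereal (x \<bullet> \<theta>) \<le> ereal (x \<bullet> \<theta>')" by auto
  qed
qed

end

lemma INF_uminus_image_inner: "(INF \<theta>\<in>uminus ` S. ereal (x \<bullet> \<theta>)) = - (SUP \<theta>\<in>S. ereal (x \<bullet> \<theta>))"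
proof -
  have "(INF \<theta>\<in>uminus ` S. ereal (x \<bullet> \<theta>)) = (INF \<theta>\<in>S. - ereal (x \<bullet> \<theta>))"
    by (simp add: image_comp o_def)
  also have "\<dots> = - (SUP \<theta>\<in>S. ereal (x \<bullet> \<theta>))" by (rule ereal_INF_uminus_eq)
  finally show ?thesis .
qed

theorem theorem2:
  fixes f :: "('d::finite \<Rightarrow> nat) \<Rightarrow> real"
  assumes nonneg: "\<And>i. f i \<ge> 0"
    and interior_ne: "interior (abs_conv_domain f) \<noteq> {}"
    and CG: "\<exists>a>0. \<exists>b>0. \<exists>c>0. \<forall>x y :: real^'d.
               nu_ball f (x + y) a \<ge> c * nu_ball f x b * nu_ball f y b"
    and tau_fin: "(SUP x\<in>{x :: real^'d. l1norm x = 1}. psi f x) < \<infinity>"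
  shows "(\<forall>x :: real^'d. - psi f x = (SUP \<theta>\<in>closure (Omega f). ereal (x \<bullet> \<theta>)))
       \<and> (\<forall>x :: real^'d. (\<forall>k. x $ k \<ge> 0) \<longrightarrow>
            psi f x = (INF \<theta>\<in>uminus ` closure (Omega f). ereal (x \<bullet> \<theta>)))
       \<and> (Omega f \<noteq> UNIV \<longrightarrow> (\<forall>x :: real^'d. (\<forall>k. x $ k \<ge> 0) \<longrightarrow>
            psi f x = (INF \<theta>\<in>uminus ` frontier (closure (Omega f)). ereal (x \<bullet> \<theta>))))"
proof -
  interpret cg_series f
    using nonneg CG tau_fin by unfold_locales (simp_all add: concave_growth_def tau_nu_def)
  have psi_eq: "psi f x = - (SUP \<theta>\<in>linear_majorants f. ereal (x \<bullet> \<theta>))" for x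
    using neg_psi_eq_SUP_linear_majorants[of x] by (simp add: ereal_uminus_eq_reorder)
  show ?thesis
    unfolding INF_uminus_image_inner closure_Omega
    using psi_eq SUP_frontier_linear_majorants[OF linear_majorants_ne_UNIV]
    by (simp add: ereal_uminus_eq_reorder)
qed

end
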